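(* Let $(a,b)\in\overline{\mathbf H}$. There is a unique $y\in\mathbb C$ for which there exists $(c,d)\in\overline{\mathbf H}$ with $$(c(z),d(z)z)=(1+|y|^2)^{-1/2}(1,-y)(a(z),b(z))\quad\text{for a.e. }z\in\mathbb T.$$ Consequently one may define recursively $(a_0,b_0)=(a,b)$ and, for $n\ge0$, $(a_{n+1}(z),b_{n+1}(z)z)=(1+|F_n|^2)^{-1/2}(1,-F_n)(a_n(z),b_n(z))$, where $F_n$ is the unique complex number such that $(a_{n+1},b_{n+1})\in\overline{\mathbf H}$. Then the sequence $(F_n)_{n\ge0}$ is square summable and $$a(\infty)\le\prod_{n\ge0}(1+|F_n|^2)^{-1/2}.$$ If $(a,b)\notin\mathbf H$, the inequality is strict.
   Context: $\mathbb T$ is the unit circle, $\mathbb D$ the open unit disc, $\mathbb D^*=\{\overline z^{-1}:z\in\mathbb D\}$, $a^*(z)=\overline{a(\overline z^{-1})}$ (so $a^*=\overline a$ on $\mathbb T$). $H^2(\mathbb D)$ is the space of $f\in L^2(\mathbb T)$ with vanishing negative Fourier coefficients (identified with its analytic extension to $\mathbb D$); $H^2(\mathbb D^* )$ the space of $f$ with $f^*\in H^2(\mathbb D)$, and $f(\infty):=\overline{f^*(0)}$. Pairs multiply as $(a,b)(c,d)=(ac-bd^*,ad+bc^* )$, with $y^*=\overline y$ for a constant $y$; thus $(1,-y)(a,b)=(a+yb^*,b-ya^* )$. $\mathbf L$ is the set of pairs $(a,b)$ of measurable functions on $\mathbb T$ with $aa^*+bb^*=1$ a.e., $a\in H^2(\mathbb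 D^* )$, $a(\infty)>0$. $\overline{\mathbf H}$ is the set of $(a,b)\in\mathbf L$ with $b\in H^2(\mathbb D)$. $\mathbf H$ is the set of $(a,b)\in\overline{\mathbf H}$ such that $a^*$ and $b$ have no common inner factor: whenever $g$ is an inner function (an $H^\infty(\mathbb D)$ function with $|g|=1$ a.e. on $\mathbb T$) with $a^*g^{-1},bg^{-1}\in H^2(\mathbb D)$, $g$ is constant. *)

theory Defs
  imports "HOL-Analysis.Analysis"
begin

text \<open>Functions on the unit circle T are functions complex \<Rightarrow> complex, considered only
  on T and parametrised by t \<mapsto> cis t, t \<in> [0, 2 pi], with Lebesgue measure.\<close>

definition T_meas :: "real measure" where
  "T_meas = lebesgue_on {0..2*pi}"

definition ae_T :: "(complex \<Rightarrow> bool) \<Rightarrow> bool" where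
  "ae_T P \<longleftrightarrow> (AE t in T_meas. P (cis t))"

definition meas_T :: "(complex \<Rightarrow> complex) \<Rightarrow> bool" where
  "meas_T f \<longleftrightarrow> (\<lambda>t. f (cis t)) \<in> borel_measurable T_meas"

definition L2_T :: "(complex \<Rightarrow> complex) \<Rightarrow> bool" where
  "L2_T f \<longleftrightarrow> meas_T f \<and> integrable T_meas (\<lambda>t. (cmod (f (cis t)))\<^sup>2)"

definition fourier_coeff :: "(complex \<Rightarrow> complex) \<Rightarrow> int \<Rightarrow> complex" where
  "fourier_coeff f n = complex_of_real (1 / (2*pi)) *
      integral\<^sup>L T_meas (\<lambda>t. f (cis t) * cis (- (of_int n * t)))"

text \<open>a^*(z) = conj (a (1 / conj z)); on T this is conj a.\<close>
definition star_fun :: "(complex \<Rightarrow> complex) \<Rightarrow> complex \<Rightarrow> complex" where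
  "star_fun a z = cnj (a (inverse (cnj z)))"

definition H2_D :: "(complex \<Rightarrow> complex) \<Rightarrow> bool" where
  "H2_D f \<longleftrightarrow> L2_T f \<and> (\<forall>n<0. fourier_coeff f n = 0)"

definition H2_Dstar :: "(complex \<Rightarrow> complex) \<Rightarrow> bool" where
  "H2_Dstar f \<longleftrightarrow> H2_D (star_fun f)"

definition H2_ext :: "(complex \<Rightarrow> complex) \<Rightarrow> complex \<Rightarrow> complex" where
  "H2_ext f z = (\<Sum>n. fourier_coeff f (int n) * z ^ n)"

definition at_inf :: "(complex \<Rightarrow> complex) \<Rightarrow> complex" where
  "at_inf f = cnj (H2_ext (star_fun f) 0)"

definition pmult :: "(complex \<Rightarrow> complex) \<times> (complex \<Rightarrow> complex) \<Rightarrow>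
    (complex \<Rightarrow> complex) \<times> (complex \<Rightarrow> complex) \<Rightarrow> (complex \<Rightarrow> complex) \<times> (complex \<Rightarrow> complex)" where
  "pmult p q = (case p of (a, b) \<Rightarrow> case q of (c, d) \<Rightarrow>
     (\<lambda>z. a z * c z - b z * star_fun d z, \<lambda>z. a z * d z + b z * star_fun c z))"

definition Lset :: "((complex \<Rightarrow> complex) \<times> (complex \<Rightarrow> complex)) set" where
  "Lset = {(a, b). meas_T a \<and> meas_T b \<and>
     ae_T (\<lambda>z. a z * star_fun a z + b z * star_fun b z = 1) \<and>
     H2_Dstar a \<and> at_inf a \<in> \<real> \<and> Re (at_inf a) > 0}"

definition Hbar :: "((complex \<Rightarrow> complex) \<times> (complex \<Rightarrow> complex)) set" where
  "Hbar = {(a, b). (a, b) \<in> Lset \<and> H2_D b}"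

text \<open>Inner functions, identified with their boundary values on T
  (H^\<infinity>(D) = H^2(D) \<inter> L^\<infinity>(T); |g| = 1 a.e. gives boundedness).\<close>
definition inner_fun :: "(complex \<Rightarrow> complex) \<Rightarrow> bool" where
  "inner_fun g \<longleftrightarrow> H2_D g \<and> ae_T (\<lambda>z. cmod (g z) = 1)"

definition Hset :: "((complex \<Rightarrow> complex) \<times> (complex \<Rightarrow> complex)) set" where
  "Hset = {(a, b). (a, b) \<in> Hbar \<and>
     (\<forall>g. inner_fun g \<and> H2_D (\<lambda>z. star_fun a z / g z) \<and> H2_D (\<lambda>z. b z / g z)
        \<longrightarrow> (\<exists>c. ae_T (\<lambda>z. g z = c)))}"

definition step_rel :: "(complex \<Rightarrow> complex) \<Rightarrow> (complex \<Rightarrow> complex) \<Rightarrow> complex \<Rightarrow>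
    (complex \<Rightarrow> complex) \<Rightarrow> (complex \<Rightarrow> complex) \<Rightarrow> bool" where
  "step_rel a b y c d \<longleftrightarrow>
     ae_T (\<lambda>z. (c z, d z * z) =
        (complex_of_real (1 / sqrt (1 + (cmod y)\<^sup>2)) * fst (pmult (\<lambda>_. 1, \<lambda>_. - y) (a, b)) z,
         complex_of_real (1 / sqrt (1 + (cmod y)\<^sup>2)) * snd (pmult (\<lambda>_. 1, \<lambda>_. - y) (a, b)) z))"

end

theory Submission
  imports Defs
begin

(* The step is explicit: with alpha = a(inf) > 0, the zeroth Fourier coefficient of z d = b - y a^*
   (up to scaling) must vanish, which forces y = b^(0) / alpha; then c(inf) = alpha (1 + |y|^2)^(1/2).
   Since |a_n| <= 1 on T, the amplitudes alpha_n = a_n(inf) <= 1 grow by the factors (1 + |F_n|^2)^(1/2);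
   so the partial products of (1 + |F_n|^2)^(-1/2) decrease and stay above alpha_0, which gives the
   inequality, and the partial products of 1 + |F_n|^2 stay below alpha_0^(-2), which gives summability.
   If (a, b) is not in H, a nonconstant inner function g divides a^* and b. The step relation passes
   this divisibility on to every (a_n, b_n), because the zeroth Fourier coefficient is multiplicative on
   H^inf(D) * H^2(D) (approximate g in L^2 by trigonometric polynomials). Hence alpha_n <= |g^(0)| < 1
   for all n, and the inequality is strict. *)

section \<open>Square-integrable functions and Fourier coefficients\<close>

lemma space_T_meas [simp]: "space T_meas = {0..2*pi}"
  by (simp add: T_meas_def)

lemma sets_T_meas_iff: "A \<in> sets T_meas \<longleftrightarrow> A \<in> sets lebesgue \<and> A \<subseteq> {0..2*pi}"
  unfolding T_meas_def by (auto simp: sets_restrict_space_iff)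

lemma finite_measure_T_meas: "finite_measure T_meas"
  unfolding T_meas_def by (rule finite_measure_lebesgue_on) simp

lemma measure_T_meas [simp]: "measure T_meas {0..2*pi} = 2*pi"
  unfolding T_meas_def by (simp add: measure_restrict_space)

lemma integrable_T_meas_const: "integrable T_meas (\<lambda>t. c::'a::{banach,second_countable_topology})"
  using finite_measure_T_meas finite_measure.integrable_const by blast

lemma measurable_T_meas_continuous: "continuous_on {0..2*pi} g \<Longrightarrow> g \<in> borel_measurable T_meas"
  unfolding T_meas_def by (rule continuous_imp_measurable_on_sets_lebesgue) auto

lemma measurable_ident_T_meas [measurable]: "(\<lambda>t. t) \<in> borel_measurable T_meas"
  by (rule measurable_T_meas_continuous) (rule continuous_on_id)

lemma measurable_cis [measurable]: "f \<in> borel_measurable M \<Longrightarrow> (\<lambda>x. cis (f x)) \<in> borel_measurable M"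
  by (rule borel_measurable_continuous_on[where f=cis]) (auto intro: continuous_intros)

lemma measurable_cnj [measurable]: "f \<in> borel_measurable M \<Longrightarrow> (\<lambda>x. cnj (f x)) \<in> borel_measurable M"
  by (rule borel_measurable_continuous_on[where f=cnj]) (auto intro: continuous_intros)

lemma measurable_cis_uminus [measurable]: "(\<lambda>t. cis (- t)) \<in> borel_measurable T_meas"
  unfolding cis_cnj[symmetric] by measurable

lemma star_fun_cis [simp]: "star_fun f (cis t) = cnj (f (cis t))"
  by (simp add: star_fun_def cis_cnj)

definition L2_par :: "(real \<Rightarrow> complex) \<Rightarrow> bool" where
  "L2_par h \<longleftrightarrow> h \<in> borel_measurable T_meas \<and> integrable T_meas (\<lambda>t. (cmod (h t))\<^sup>2)"

definition fcoeff :: "(real \<Rightarrow> complex) \<Rightarrow> int \<Rightarrow> complex" where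
  "fcoeff h n = complex_of_real (1 / (2*pi)) * integral\<^sup>L T_meas (\<lambda>t. h t * cis (- (of_int n * t)))"

definition H2_par :: "(real \<Rightarrow> complex) \<Rightarrow> bool" where
  "H2_par h \<longleftrightarrow> L2_par h \<and> (\<forall>n<0. fcoeff h n = 0)"

lemma L2_T_iff: "L2_T f \<longleftrightarrow> L2_par (\<lambda>t. f (cis t))"
  by (simp add: L2_T_def L2_par_def meas_T_def)

lemma fourier_coeff_eq_fcoeff: "fourier_coeff f n = fcoeff (\<lambda>t. f (cis t)) n"
  by (simp add: fourier_coeff_def fcoeff_def)

lemma H2_D_iff: "H2_D f \<longleftrightarrow> H2_par (\<lambda>t. f (cis t))"
  by (simp add: H2_D_def H2_par_def L2_T_iff fourier_coeff_eq_fcoeff)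

lemma H2_Dstar_iff: "H2_Dstar f \<longleftrightarrow> H2_par (\<lambda>t. cnj (f (cis t)))"
  by (simp add: H2_Dstar_def H2_D_iff)

lemma at_inf_eq_fcoeff: "at_inf f = cnj (fcoeff (\<lambda>t. cnj (f (cis t))) 0)"
  by (simp add: at_inf_def H2_ext_def fourier_coeff_eq_fcoeff)

lemma L2_parD [measurable_dest]: "L2_par h \<Longrightarrow> h \<in> borel_measurable T_meas"
  by (simp add: L2_par_def)

lemma H2_parD: "H2_par h \<Longrightarrow> L2_par h" "H2_par h \<Longrightarrow> n < 0 \<Longrightarrow> fcoeff h n = 0"
  by (simp_all add: H2_par_def)

lemma integrable_T_meas_bounded:
  fixes h :: "real \<Rightarrow> 'a::{banach,second_countable_topology}"
  assumes "h \<in> borel_measurable T_meas" "AE t in T_meas. norm (h t) \<le> C"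
  shows "integrable T_meas h"
  using assms(2)
  by (intro Bochner_Integration.integrable_bound[OF integrable_T_meas_const[of C] assms(1)])
    (auto elim: eventually_mono)

lemma L2_par_bounded:
  assumes "h \<in> borel_measurable T_meas" "AE t in T_meas. cmod (h t) \<le> C"
  shows "L2_par h"
  unfolding L2_par_def
proof
  show "integrable T_meas (\<lambda>t. (cmod (h t))\<^sup>2)"
    using assms(2)
    by (intro integrable_T_meas_bounded[where C="C\<^sup>2"]) (use assms(1) in \<open>measurable, auto simp: power_mono elim: eventually_mono\<close>)
qed fact

lemma L2_par_integrable:
  assumes "L2_par h" shows "integrable T_meas h"
proof (rule Bochner_Integration.integrable_bound)
  show "integrable T_meas (\<lambda>t. 1 + (cmod (h t))\<^sup>2)"
    using assms integrable_T_meas_const[of "1::real"] unfolding L2_par_def by auto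
  have "x \<le> 1 + x\<^sup>2" for x :: real
  proof (cases "x \<le> 0")
    case False
    then show ?thesis using sum_squares_bound[of x 1] by simp
  qed (use zero_le_power2[of x] in linarith)
  then show "AE t in T_meas. norm (h t) \<le> norm (1 + (cmod (h t))\<^sup>2)"
    by (intro AE_I2) simp
qed (use assms in measurable)

lemma norm_sq_add_le: "(cmod (x + y))\<^sup>2 \<le> 2 * (cmod x)\<^sup>2 + 2 * (cmod y)\<^sup>2"
proof -
  have "(cmod (x + y))\<^sup>2 \<le> (cmod x + cmod y)\<^sup>2"
    by (simp add: power_mono norm_triangle_ineq)
  also have "\<dots> \<le> 2 * (cmod x)\<^sup>2 + 2 * (cmod y)\<^sup>2"
    using sum_squares_bound[of "cmod x" "cmod y"] by (simp add: power2_sum)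
  finally show ?thesis .
qed

lemma L2_par_add:
  assumes "L2_par h" "L2_par k" shows "L2_par (\<lambda>t. h t + k t)"
  unfolding L2_par_def
proof
  show "integrable T_meas (\<lambda>t. (cmod (h t + k t))\<^sup>2)"
  proof (rule Bochner_Integration.integrable_bound)
    show "integrable T_meas (\<lambda>t. 2 * (cmod (h t))\<^sup>2 + 2 * (cmod (k t))\<^sup>2)"
      using assms unfolding L2_par_def by auto
    show "AE t in T_meas. norm ((cmod (h t + k t))\<^sup>2) \<le> norm (2 * (cmod (h t))\<^sup>2 + 2 * (cmod (k t))\<^sup>2)"
      using norm_sq_add_le by (intro AE_I2) simp
  qed (use assms in measurable)
qed (use assms in measurable)

lemma L2_par_scale: "L2_par h \<Longrightarrow> L2_par (\<lambda>t. c * h t)"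
  unfolding L2_par_def by (auto simp: norm_mult power_mult_distrib)

lemma L2_par_cnj: "L2_par h \<Longrightarrow> L2_par (\<lambda>t. cnj (h t))"
  unfolding L2_par_def by auto

lemma L2_par_diff: "L2_par h \<Longrightarrow> L2_par k \<Longrightarrow> L2_par (\<lambda>t. h t - k t)"
  using L2_par_add[OF _ L2_par_scale[of k "-1"]] by simp

lemma L2_par_mult_unimodular:
  assumes "L2_par h" "u \<in> borel_measurable T_meas" "\<And>t. cmod (u t) = 1"
  shows "L2_par (\<lambda>t. h t * u t)"
proof -
  have "(\<lambda>t. (cmod (h t * u t))\<^sup>2) = (\<lambda>t. (cmod (h t))\<^sup>2)"
    by (simp add: norm_mult assms(3))
  with assms(1,2) show ?thesis
    unfolding L2_par_def by (simp add: borel_measurable_times)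
qed

lemma L2_par_cong:
  assumes "L2_par h" "k \<in> borel_measurable T_meas" "AE t in T_meas. h t = k t"
  shows "L2_par k"
  unfolding L2_par_def
proof
  show "integrable T_meas (\<lambda>t. (cmod (k t))\<^sup>2)"
    using assms(1) unfolding L2_par_def
    by (subst integrable_cong_AE[where g="\<lambda>t. (cmod (h t))\<^sup>2"]) (use assms(2,3) in \<open>measurable, auto elim: eventually_mono\<close>)
qed fact

lemma integrable_L2_par_mult:
  assumes "L2_par h" "L2_par k" shows "integrable T_meas (\<lambda>t. h t * k t)"
proof (rule Bochner_Integration.integrable_bound)
  show "integrable T_meas (\<lambda>t. (cmod (h t))\<^sup>2 + (cmod (k t))\<^sup>2)"
    using assms unfolding L2_par_def by auto
  have "x * y \<le> x\<^sup>2 + y\<^sup>2" if "x \<ge> 0" "y \<ge> 0" for x y :: real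
    using sum_squares_bound[of x y] that mult_nonneg_nonneg[OF that] by linarith
  then show "AE t in T_meas. norm (h t * k t) \<le> norm ((cmod (h t))\<^sup>2 + (cmod (k t))\<^sup>2)"
    by (intro AE_I2) (simp add: norm_mult)
qed (use assms in measurable)

lemma integral_T_meas_eq_integral:
  fixes f :: "real \<Rightarrow> complex"
  assumes "integrable T_meas f"
  shows "integral\<^sup>L T_meas f = integral {0..2*pi} f"
  using has_integral_integral_lebesgue_on[of "{0..2*pi}" f] assms
  unfolding T_meas_def by (simp add: integral_unique)

lemma integral_cis_int_mult:
  "integral\<^sup>L T_meas (\<lambda>t. cis (of_int k * t)) = (if k = 0 then complex_of_real (2*pi) else 0)"
proof (cases "k = 0")
  case True
  then show ?thesis by (simp add: scaleR_conv_of_real)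
next
  case False
  have int: "integrable T_meas (\<lambda>t. cis (of_int k * t))"
    by (rule integrable_T_meas_bounded[where C=1]) (auto intro!: AE_I2)
  have eq: "(\<lambda>t. cis (of_int k * t)) = (\<lambda>t. exp ((\<i> * of_int k) * complex_of_real t))"
    by (rule ext) (simp add: cis_conv_exp mult.commute mult.left_commute)
  have "integral {0..2*pi} (\<lambda>t. exp ((\<i> * of_int k) * complex_of_real t))
      = (exp ((\<i> * of_int k) * of_real (2*pi)) - 1) / (\<i> * of_int k)"
    using False by (intro integral_exp) auto
  also have "exp ((\<i> * of_int k) * of_real (2*pi)) = cis (2 * pi * of_int k)"
    by (simp add: cis_conv_exp mult.commute mult.left_commute)
  also have "\<dots> = 1"
    by (rule cis_multiple_2pi) simp
  finally show ?thesis
    using False integral_T_meas_eq_integral[OF int] eq by simp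
qed

lemma integrable_mult_cis:
  assumes "integrable T_meas h"
  shows "integrable T_meas (\<lambda>t. h t * cis (c * t))"
  by (rule Bochner_Integration.integrable_bound[OF assms]) (use assms in \<open>measurable, auto simp: norm_mult\<close>)

lemma integrable_mult_cis_int:
  "integrable T_meas h \<Longrightarrow> integrable T_meas (\<lambda>t. h t * cis (- (of_int n * t)))"
  using integrable_mult_cis[of h "- of_int n"] by simp

lemma fcoeff_add:
  assumes "integrable T_meas h" "integrable T_meas k"
  shows "fcoeff (\<lambda>t. h t + k t) n = fcoeff h n + fcoeff k n"
  using integrable_mult_cis_int[OF assms(1)] integrable_mult_cis_int[OF assms(2)]
  unfolding fcoeff_def by (simp add: algebra_simps)

lemma fcoeff_scale: "fcoeff (\<lambda>t. c * h t) n = c * fcoeff h n"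
  unfolding fcoeff_def by (simp add: mult.assoc mult.left_commute)

lemma fcoeff_diff:
  assumes "integrable T_meas h" "integrable T_meas k"
  shows "fcoeff (\<lambda>t. h t - k t) n = fcoeff h n - fcoeff k n"
  using fcoeff_add[OF assms(1), of "\<lambda>t. (-1) * k t"] fcoeff_scale[of "-1" k] assms(2) by simp

lemma fcoeff_sum:
  assumes "finite F" "\<And>i. i \<in> F \<Longrightarrow> integrable T_meas (g i)"
  shows "fcoeff (\<lambda>t. \<Sum>i\<in>F. g i t) n = (\<Sum>i\<in>F. fcoeff (g i) n)"
  using assms
proof (induction F rule: finite_induct)
  case empty
  then show ?case using fcoeff_scale[of 0 "\<lambda>t. 0" n] by simp
next
  case (insert x F)
  then show ?case by (simp add: fcoeff_add Bochner_Integration.integrable_sum)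
qed

lemma fcoeff_cong:
  assumes "h \<in> borel_measurable T_meas" "k \<in> borel_measurable T_meas" "AE t in T_meas. h t = k t"
  shows "fcoeff h n = fcoeff k n"
proof -
  have "integral\<^sup>L T_meas (\<lambda>t. h t * cis (- (of_int n * t))) = integral\<^sup>L T_meas (\<lambda>t. k t * cis (- (of_int n * t)))"
    by (rule integral_cong_AE) (use assms in \<open>measurable, auto elim: eventually_mono\<close>)
  then show ?thesis
    unfolding fcoeff_def by simp
qed

lemma fcoeff_mult_cis: "fcoeff (\<lambda>t. h t * cis t) n = fcoeff h (n - 1)"
proof -
  have "(\<lambda>t. h t * cis t * cis (- (of_int n * t))) = (\<lambda>t. h t * cis (- (of_int (n - 1) * t)))"
    by (rule ext) (simp add: mult.assoc cis_mult algebra_simps)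
  then show ?thesis unfolding fcoeff_def by simp
qed

lemma fcoeff_mult_cis_uminus: "fcoeff (\<lambda>t. h t * cis (- t)) n = fcoeff h (n + 1)"
proof -
  have "(\<lambda>t. h t * cis (- t) * cis (- (of_int n * t))) = (\<lambda>t. h t * cis (- (of_int (n + 1) * t)))"
    by (rule ext) (simp add: mult.assoc cis_mult algebra_simps)
  then show ?thesis unfolding fcoeff_def by simp
qed

lemma fcoeff_cis: "fcoeff (\<lambda>t. cis (of_int m * t)) n = (if m = n then 1 else 0)"
proof -
  have e: "(\<lambda>t. cis (of_int m * t) * cis (- (of_int n * t))) = (\<lambda>t. cis (of_int (m - n) * t))"
    by (rule ext) (simp add: cis_mult algebra_simps)
  show ?thesis unfolding fcoeff_def e integral_cis_int_mult by simp
qed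

lemma norm_fcoeff_le:
  assumes "h \<in> borel_measurable T_meas" "AE t in T_meas. cmod (h t) \<le> C"
  shows "cmod (fcoeff h n) \<le> C"
proof -
  let ?g = "\<lambda>t. h t * cis (- (of_int n * t))"
  have bound: "AE t in T_meas. cmod (?g t) \<le> C"
    using assms(2) by (auto simp: norm_mult elim: eventually_mono)
  have "cmod (integral\<^sup>L T_meas ?g) \<le> integral\<^sup>L T_meas (\<lambda>t. cmod (?g t))"
    by (rule integral_norm_bound)
  also have "\<dots> \<le> integral\<^sup>L T_meas (\<lambda>t. C)"
    using bound
    by (intro integral_mono_AE integrable_T_meas_const integrable_norm integrable_T_meas_bounded[where C=C])
      (use assms(1) in measurable)
  also have "\<dots> = 2 * pi * C"
    by simp
  finally have "1 / (2*pi) * cmod (integral\<^sup>L T_meas ?g) \<le> 1 / (2*pi) * (2 * pi * C)"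
    by (intro mult_left_mono) auto
  then show ?thesis
    unfolding fcoeff_def norm_mult norm_of_real by simp
qed

lemma H2_par_add: "H2_par h \<Longrightarrow> H2_par k \<Longrightarrow> H2_par (\<lambda>t. h t + k t)"
  unfolding H2_par_def by (auto simp: L2_par_add fcoeff_add L2_par_integrable)

lemma H2_par_scale: "H2_par h \<Longrightarrow> H2_par (\<lambda>t. c * h t)"
  unfolding H2_par_def by (auto simp: L2_par_scale fcoeff_scale)

lemma H2_par_diff: "H2_par h \<Longrightarrow> H2_par k \<Longrightarrow> H2_par (\<lambda>t. h t - k t)"
  unfolding H2_par_def by (auto simp: L2_par_diff fcoeff_diff L2_par_integrable)

lemma H2_par_cong:
  assumes "H2_par h" "k \<in> borel_measurable T_meas" "AE t in T_meas. h t = k t"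
  shows "H2_par k"
  using assms L2_par_cong fcoeff_cong[of h k] unfolding H2_par_def by (metis L2_parD)

lemma H2_par_mult_cis_uminus:
  assumes "H2_par w" "fcoeff w 0 = 0"
  shows "H2_par (\<lambda>t. w t * cis (- t))"
  unfolding H2_par_def
proof
  show "L2_par (\<lambda>t. w t * cis (- t))"
    using assms(1) by (intro L2_par_mult_unimodular) (auto simp: H2_par_def)
  show "\<forall>n<0. fcoeff (\<lambda>t. w t * cis (- t)) n = 0"
  proof (intro allI impI)
    fix n :: int
    assume "n < 0"
    then have "n + 1 < 0 \<or> n + 1 = 0" by linarith
    then show "fcoeff (\<lambda>t. w t * cis (- t)) n = 0"
      unfolding fcoeff_mult_cis_uminus using assms by (auto simp: H2_par_def)
  qed
qed

section \<open>Trigonometric polynomials\<close>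

definition trig_poly :: "int set \<Rightarrow> (int \<Rightarrow> complex) \<Rightarrow> real \<Rightarrow> complex" where
  "trig_poly F c t = (\<Sum>n\<in>F. c n * cis (of_int n * t))"

lemma continuous_on_trig_poly: "continuous_on S (trig_poly F c)"
  unfolding trig_poly_def by (intro continuous_intros)

lemma measurable_trig_poly [measurable]: "trig_poly F c \<in> borel_measurable T_meas"
  by (rule measurable_T_meas_continuous[OF continuous_on_trig_poly])

lemma norm_trig_poly_le: "cmod (trig_poly F c t) \<le> (\<Sum>n\<in>F. cmod (c n))"
  unfolding trig_poly_def by (rule order_trans[OF norm_sum]) (simp add: norm_mult)

lemma L2_par_trig_poly: "L2_par (trig_poly F c)"
  by (rule L2_par_bounded[OF measurable_trig_poly, where C="\<Sum>n\<in>F. cmod (c n)"]) (simp add: norm_trig_poly_le)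

lemma fcoeff_trig_poly:
  assumes "finite F"
  shows "fcoeff (trig_poly F c) n = (if n \<in> F then c n else 0)"
proof -
  have "fcoeff (trig_poly F c) n = (\<Sum>i\<in>F. fcoeff (\<lambda>t. c i * cis (of_int i * t)) n)"
    unfolding trig_poly_def
    by (rule fcoeff_sum[OF assms]) (rule integrable_T_meas_bounded[where C="cmod (c _)"], measurable, auto simp: norm_mult)
  also have "\<dots> = (\<Sum>i\<in>F. if i = n then c i else 0)"
    by (intro sum.cong refl) (simp add: fcoeff_scale fcoeff_cis)
  finally show ?thesis
    using assms by (simp add: sum.delta)
qed

lemma integral_mult_trig_poly:
  assumes "integrable T_meas f" "finite F"
  shows "integral\<^sup>L T_meas (\<lambda>t. f t * trig_poly F c t)
    = complex_of_real (2*pi) * (\<Sum>n\<in>F. c n * fcoeff f (- n))"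
proof -
  have "(\<lambda>t. f t * trig_poly F c t) = (\<lambda>t. \<Sum>n\<in>F. c n * (f t * cis (of_int n * t)))"
    by (rule ext) (simp add: trig_poly_def sum_distrib_left mult_ac)
  then have "integral\<^sup>L T_meas (\<lambda>t. f t * trig_poly F c t)
      = (\<Sum>n\<in>F. integral\<^sup>L T_meas (\<lambda>t. c n * (f t * cis (of_int n * t))))"
    using integrable_mult_cis[OF assms(1)] by (simp add: Bochner_Integration.integral_sum)
  also have "\<dots> = (\<Sum>n\<in>F. c n * (complex_of_real (2*pi) * fcoeff f (- n)))"
    by (simp add: fcoeff_def)
  finally show ?thesis by (simp add: sum_distrib_left mult_ac)
qed

lemma integral_mult_cnj_trig_poly:
  assumes "integrable T_meas f" "finite F"
  shows "integral\<^sup>L T_meas (\<lambda>t. f t * cnj (trig_poly F c t))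
    = complex_of_real (2*pi) * (\<Sum>n\<in>F. cnj (c n) * fcoeff f n)"
proof -
  have "(\<lambda>t. f t * cnj (trig_poly F c t)) = (\<lambda>t. \<Sum>n\<in>F. cnj (c n) * (f t * cis (- (of_int n * t))))"
    by (rule ext) (simp add: trig_poly_def sum_distrib_left mult_ac cis_cnj)
  then have "integral\<^sup>L T_meas (\<lambda>t. f t * cnj (trig_poly F c t))
      = (\<Sum>n\<in>F. integral\<^sup>L T_meas (\<lambda>t. cnj (c n) * (f t * cis (- (of_int n * t)))))"
    using integrable_mult_cis_int[OF assms(1)] by (simp add: Bochner_Integration.integral_sum)
  also have "\<dots> = (\<Sum>n\<in>F. cnj (c n) * (complex_of_real (2*pi) * fcoeff f n))"
    by (simp add: fcoeff_def)
  finally show ?thesis by (simp add: sum_distrib_left mult_ac)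
qed

lemma integral_norm_sub_fourier_sum:
  assumes f: "L2_par f" and F: "finite F"
  shows "integral\<^sup>L T_meas (\<lambda>t. (cmod (f t - trig_poly F (fcoeff f) t))\<^sup>2)
    = integral\<^sup>L T_meas (\<lambda>t. (cmod (f t))\<^sup>2) - 2 * pi * (\<Sum>n\<in>F. (cmod (fcoeff f n))\<^sup>2)"
proof -
  define s where "s = trig_poly F (fcoeff f)"
  define S where "S = (\<Sum>n\<in>F. (cmod (fcoeff f n))\<^sup>2)"
  have sL: "L2_par s" unfolding s_def by (rule L2_par_trig_poly)
  have coeffs: "(\<Sum>n\<in>F. cnj (fcoeff f n) * fcoeff f n) = complex_of_real S"
    unfolding S_def of_real_sum by (intro sum.cong refl) (simp only: complex_norm_square mult.commute)
  have i1: "integrable T_meas (\<lambda>t. f t * cnj (f t))"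
    and i2: "integrable T_meas (\<lambda>t. f t * cnj (s t))"
    and i3: "integrable T_meas (\<lambda>t. cnj (f t * cnj (s t)))"
    and i4: "integrable T_meas (\<lambda>t. s t * cnj (s t))"
    using integrable_L2_par_mult[OF f L2_par_cnj[OF f]] integrable_L2_par_mult[OF f L2_par_cnj[OF sL]]
      integrable_L2_par_mult[OF L2_par_cnj[OF f] sL] integrable_L2_par_mult[OF sL L2_par_cnj[OF sL]]
    by simp_all
  have I1: "integral\<^sup>L T_meas (\<lambda>t. f t * cnj (f t)) = complex_of_real (integral\<^sup>L T_meas (\<lambda>t. (cmod (f t))\<^sup>2))"
    unfolding complex_norm_square[symmetric] by (rule integral_complex_of_real)
  have I2: "integral\<^sup>L T_meas (\<lambda>t. f t * cnj (s t)) = complex_of_real (2 * pi * S)"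
    unfolding s_def integral_mult_cnj_trig_poly[OF L2_par_integrable[OF f] F] coeffs by simp
  have I3: "integral\<^sup>L T_meas (\<lambda>t. cnj (f t) * s t) = complex_of_real (2 * pi * S)"
    using Bochner_Integration.integral_cnj[of T_meas "\<lambda>t. f t * cnj (s t)"] I2 by simp
  have "(\<Sum>n\<in>F. cnj (fcoeff f n) * fcoeff s n) = (\<Sum>n\<in>F. cnj (fcoeff f n) * fcoeff f n)"
    unfolding s_def by (intro sum.cong refl) (simp add: fcoeff_trig_poly[OF F])
  then have I4: "integral\<^sup>L T_meas (\<lambda>t. s t * cnj (s t)) = complex_of_real (2 * pi * S)"
    using integral_mult_cnj_trig_poly[OF L2_par_integrable[OF sL] F, of "fcoeff f"]
    unfolding s_def[symmetric] coeffs by simp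
  have "(\<lambda>t. complex_of_real ((cmod (f t - s t))\<^sup>2))
      = (\<lambda>t. f t * cnj (f t) - f t * cnj (s t) - cnj (f t * cnj (s t)) + s t * cnj (s t))"
    unfolding complex_norm_square by (simp add: algebra_simps)
  then have "complex_of_real (integral\<^sup>L T_meas (\<lambda>t. (cmod (f t - s t))\<^sup>2))
      = complex_of_real (integral\<^sup>L T_meas (\<lambda>t. (cmod (f t))\<^sup>2) - 2 * pi * S)"
    unfolding integral_complex_of_real[symmetric]
    using i1 i2 i3 i4 by (simp add: I1 I2 I3 I4)
  then show ?thesis
    unfolding S_def s_def by (simp only: of_real_eq_iff)
qed

lemma bessel_inequality:
  assumes "L2_par f" "finite F"
  shows "2 * pi * (\<Sum>n\<in>F. (cmod (fcoeff f n))\<^sup>2) \<le> integral\<^sup>L T_meas (\<lambda>t. (cmod (f t))\<^sup>2)"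
proof -
  have "0 \<le> integral\<^sup>L T_meas (\<lambda>t. (cmod (f t - trig_poly F (fcoeff f) t))\<^sup>2)"
    by simp
  then show ?thesis
    using integral_norm_sub_fourier_sum[OF assms] by simp
qed

definition is_trig_poly :: "(real \<Rightarrow> complex) \<Rightarrow> bool" where
  "is_trig_poly p \<longleftrightarrow> (\<exists>F c. finite F \<and> p = trig_poly F c)"

lemma trig_poly_restrict:
  assumes "finite H" "F \<subseteq> H"
  shows "trig_poly F c t = (\<Sum>n\<in>H. (if n \<in> F then c n else 0) * cis (of_int n * t))"
proof -
  have "(\<Sum>n\<in>H. (if n \<in> F then c n else 0) * cis (of_int n * t))
      = (\<Sum>n\<in>H. if n \<in> F then c n * cis (of_int n * t) else 0)"
    by (intro sum.cong refl) auto
  also have "\<dots> = (\<Sum>n\<in>H \<inter> F. c n * cis (of_int n * t))"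
    using assms(1) by (simp add: sum.inter_restrict)
  also have "H \<inter> F = F"
    using assms(2) by auto
  finally show ?thesis unfolding trig_poly_def by simp
qed

lemma is_trig_poly_add: "is_trig_poly p \<Longrightarrow> is_trig_poly q \<Longrightarrow> is_trig_poly (\<lambda>t. p t + q t)"
proof -
  assume "is_trig_poly p" "is_trig_poly q"
  then obtain F c G d where F: "finite F" "p = trig_poly F c" and G: "finite G" "q = trig_poly G d"
    unfolding is_trig_poly_def by blast
  define e where "e n = (if n \<in> F then c n else 0) + (if n \<in> G then d n else 0)" for n
  have "p t + q t = trig_poly (F \<union> G) e t" for t
  proof -
    have "p t + q t = (\<Sum>n\<in>F \<union> G. (if n \<in> F then c n else 0) * cis (of_int n * t))
        + (\<Sum>n\<in>F \<union> G. (if n \<in> G then d n else 0) * cis (of_int n * t))"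
      using F G by (simp add: trig_poly_restrict[of "F \<union> G"])
    then show ?thesis
      unfolding trig_poly_def e_def by (simp add: sum.distrib[symmetric] distrib_right)
  qed
  then show ?thesis unfolding is_trig_poly_def using F G by blast
qed

lemma is_trig_poly_scale: "is_trig_poly p \<Longrightarrow> is_trig_poly (\<lambda>t. a * p t)"
proof -
  assume "is_trig_poly p"
  then obtain F c where F: "finite F" "p = trig_poly F c" unfolding is_trig_poly_def by blast
  have "(\<lambda>t. a * p t) = trig_poly F (\<lambda>n. a * c n)"
    unfolding F(2) trig_poly_def by (simp add: sum_distrib_left mult.assoc)
  then show ?thesis unfolding is_trig_poly_def using F by blast
qed

lemma is_trig_poly_cis: "is_trig_poly (\<lambda>t. cis (of_int n * t))"
  unfolding is_trig_poly_def by (intro exI[of _ "{n}"] exI[of _ "\<lambda>_. 1"]) (auto simp: trig_poly_def)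

lemma is_trig_poly_const: "is_trig_poly (\<lambda>t. a)"
  using is_trig_poly_scale[OF is_trig_poly_cis[of 0], of a] by simp

lemma is_trig_poly_sum:
  "finite I \<Longrightarrow> (\<And>i. i \<in> I \<Longrightarrow> is_trig_poly (p i)) \<Longrightarrow> is_trig_poly (\<lambda>t. \<Sum>i\<in>I. p i t)"
  by (induction I rule: finite_induct) (auto intro: is_trig_poly_const is_trig_poly_add)

lemma is_trig_poly_cis_mult:
  assumes "is_trig_poly q"
  shows "is_trig_poly (\<lambda>t. cis (of_int n * t) * q t)"
proof -
  obtain G d where G: "finite G" "q = trig_poly G d"
    using assms unfolding is_trig_poly_def by blast
  have "cis (of_int n * t) * q t = trig_poly ((+) n ` G) (\<lambda>k. d (k - n)) t" for t
  proof -
    have "trig_poly ((+) n ` G) (\<lambda>k. d (k - n)) t = (\<Sum>m\<in>G. d m * cis (of_int (n + m) * t))"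
      by (simp add: trig_poly_def sum.reindex inj_on_def)
    also have "\<dots> = cis (of_int n * t) * q t"
      unfolding G(2) trig_poly_def by (simp add: sum_distrib_left cis_mult algebra_simps)
    finally show ?thesis ..
  qed
  then show ?thesis
    unfolding is_trig_poly_def using G(1) by blast
qed

lemma is_trig_poly_mult:
  assumes "is_trig_poly p" "is_trig_poly q"
  shows "is_trig_poly (\<lambda>t. p t * q t)"
proof -
  obtain F c where F: "finite F" "p = trig_poly F c"
    using assms(1) unfolding is_trig_poly_def by blast
  have "(\<lambda>t. p t * q t) = (\<lambda>t. \<Sum>n\<in>F. c n * (cis (of_int n * t) * q t))"
    unfolding F(2) trig_poly_def by (simp add: sum_distrib_left sum_distrib_right mult_ac)
  then show ?thesis
    using F(1) assms(2) by (simp add: is_trig_poly_sum is_trig_poly_scale is_trig_poly_cis_mult)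
qed

lemma is_trig_poly_cos: "is_trig_poly (\<lambda>t. complex_of_real (cos t))"
proof -
  have "(\<lambda>t. complex_of_real (cos t)) = (\<lambda>t. (1/2) * cis (of_int 1 * t) + (1/2) * cis (of_int (-1) * t))"
    by (rule ext) (simp add: cis.code complex_eq_iff)
  then show ?thesis by (simp only:) (intro is_trig_poly_add is_trig_poly_scale is_trig_poly_cis)
qed

lemma is_trig_poly_sin: "is_trig_poly (\<lambda>t. complex_of_real (sin t))"
proof -
  have "(\<lambda>t. complex_of_real (sin t)) = (\<lambda>t. (- \<i>/2) * cis (of_int 1 * t) + (\<i>/2) * cis (of_int (-1) * t))"
    by (rule ext) (simp add: cis.code complex_eq_iff)
  then show ?thesis by (simp only:) (intro is_trig_poly_add is_trig_poly_scale is_trig_poly_cis)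
qed

lemma is_trig_poly_real_polynomial_function:
  assumes "real_polynomial_function q"
  shows "is_trig_poly (\<lambda>t. complex_of_real (q (cis t)))"
  using assms
proof (induction q rule: real_polynomial_function.induct)
  case (linear f)
  then interpret bounded_linear f .
  have fz: "f z = Re z * f 1 + Im z * f \<i>" for z
  proof -
    have "z = Re z *\<^sub>R 1 + Im z *\<^sub>R \<i>" by (simp add: complex_eq_iff)
    then have "f z = f (Re z *\<^sub>R 1 + Im z *\<^sub>R \<i>)" by simp
    also have "\<dots> = Re z * f 1 + Im z * f \<i>" by (simp add: add scale)
    finally show ?thesis .
  qed
  have "(\<lambda>t. complex_of_real (f (cis t)))
      = (\<lambda>t. complex_of_real (f 1) * complex_of_real (cos t) + complex_of_real (f \<i>) * complex_of_real (sin t))"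
    by (rule ext) (simp add: fz[of "cis _"] mult.commute)
  then show ?case
    by (simp only:) (intro is_trig_poly_add is_trig_poly_scale is_trig_poly_cos is_trig_poly_sin)
qed (simp_all add: is_trig_poly_const is_trig_poly_add is_trig_poly_mult)

lemma is_trig_poly_polynomial_function:
  assumes "polynomial_function P"
  shows "is_trig_poly (\<lambda>t. P (cis t))"
proof -
  have "real_polynomial_function (Re \<circ> P)" "real_polynomial_function (Im \<circ> P)"
    using assms unfolding polynomial_function_def by (auto intro: bounded_linear_Re bounded_linear_Im)
  moreover have "(\<lambda>t. P (cis t)) = (\<lambda>t. complex_of_real ((Re \<circ> P) (cis t)) + \<i> * complex_of_real ((Im \<circ> P) (cis t)))"
    by (rule ext) (simp add: complex_eq_iff)
  ultimately show ?thesis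
    by (simp only:) (intro is_trig_poly_add is_trig_poly_scale is_trig_poly_real_polynomial_function)
qed

lemma cis_image_interval: "cis ` {0..2*pi} = sphere 0 1"
proof
  show "sphere 0 1 \<subseteq> cis ` {0..2*pi}"
  proof
    fix z :: complex
    assume "z \<in> sphere 0 1"
    then have "z = cis (Arg2pi z)"
      using complex_norm_eq_1_exp[of z] by (simp add: cis_conv_exp mult.commute)
    moreover have "Arg2pi z \<in> {0..2*pi}"
      using Arg2pi[of z] by auto
    ultimately show "z \<in> cis ` {0..2*pi}" by blast
  qed
qed auto

text \<open>A continuous function on [0, 2\<pi>] with equal end values factors continuously through
  the quotient map cis onto the circle, where Stone-Weierstrass applies.\<close>

lemma periodic_continuous_trig_approx:
  fixes phi :: "real \<Rightarrow> complex"
  assumes cont: "continuous_on {0..2*pi} phi" and per: "phi 0 = phi (2*pi)" and "eta > 0"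
  obtains F c where "finite F" "\<And>t. t \<in> {0..2*pi} \<Longrightarrow> cmod (phi t - trig_poly F c t) < eta"
proof -
  define psi where "psi z = phi (Arg2pi z)" for z
  have psi_cis: "psi (cis t) = phi t" if "t \<in> {0..2*pi}" for t
  proof (cases "t = 2*pi")
    case True
    have "Arg2pi 1 = 0" by (simp add: Arg2pi_eq_0)
    then show ?thesis using per True by (simp add: psi_def)
  next
    case False
    with that have "Arg2pi (cis t) = t"
      by (intro Arg2pi_unique[of 1]) (auto simp: cis_conv_exp mult.commute)
    then show ?thesis by (simp add: psi_def)
  qed
  have q: "quotient_map (top_of_set {0..2*pi}) (top_of_set (sphere 0 1)) cis"
  proof (rule continuous_imp_quotient_map)
    show "continuous_map (top_of_set {0..2*pi}) (top_of_set (sphere 0 1)) cis"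
      using cis_image_interval by (auto simp: continuous_map_in_subtopology intro!: continuous_intros)
    show "compact_space (top_of_set {0..2*pi::real})"
      by (rule compact_space_subtopology) simp
    show "Hausdorff_space (top_of_set (sphere (0::complex) 1))"
      by (rule Hausdorff_space_subtopology) simp
  qed (simp add: cis_image_interval)
  have "continuous_map (top_of_set {0..2*pi}) euclidean (psi \<circ> cis)"
    by (rule continuous_map_eq[of _ _ phi]) (use cont psi_cis in auto)
  then have "continuous_map (top_of_set (sphere 0 1)) euclidean psi"
    by (rule continuous_compose_quotient_map[OF q])
  then have "continuous_on (sphere 0 1) psi"
    by simp
  then obtain P where P: "polynomial_function P" "\<And>z. z \<in> sphere 0 1 \<Longrightarrow> norm (psi z - P z) < eta"
    using Stone_Weierstrass_polynomial_function[OF compact_sphere _ \<open>eta > 0\<close>] by metis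
  obtain F c where F: "finite F" "(\<lambda>t. P (cis t)) = trig_poly F c"
    using is_trig_poly_polynomial_function[OF P(1)] unfolding is_trig_poly_def by blast
  show ?thesis
  proof (rule that[OF F(1)])
    fix t :: real
    assume "t \<in> {0..2*pi}"
    then show "cmod (phi t - trig_poly F c t) < eta"
      using P(2)[of "cis t"] psi_cis[of t] fun_cong[OF F(2), of t] by simp
  qed
qed

section \<open>Density of trigonometric polynomials\<close>

definition ess_bounded :: "(real \<Rightarrow> complex) \<Rightarrow> bool" where
  "ess_bounded g \<longleftrightarrow> g \<in> borel_measurable T_meas \<and> (\<exists>C. AE t in T_meas. cmod (g t) \<le> C)"

definition dist2 :: "(real \<Rightarrow> complex) \<Rightarrow> (real \<Rightarrow> complex) \<Rightarrow> real" where
  "dist2 g h = integral\<^sup>L T_meas (\<lambda>t. (cmod (g t - h t))\<^sup>2)"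

definition trig_approximable :: "(real \<Rightarrow> complex) \<Rightarrow> bool" where
  "trig_approximable g \<longleftrightarrow> ess_bounded g \<and> (\<forall>e>0. \<exists>p. is_trig_poly p \<and> dist2 g p < e)"

lemma ess_bounded_L2_par: "ess_bounded g \<Longrightarrow> L2_par g"
  unfolding ess_bounded_def using L2_par_bounded by blast

lemma ess_bounded_trig_poly: "is_trig_poly p \<Longrightarrow> ess_bounded p"
  unfolding ess_bounded_def is_trig_poly_def using norm_trig_poly_le by (fastforce intro: AE_I2)

lemma ess_bounded_add:
  assumes "ess_bounded g" "ess_bounded h"
  shows "ess_bounded (\<lambda>t. g t + h t)"
proof -
  obtain C D where "AE t in T_meas. cmod (g t) \<le> C" "AE t in T_meas. cmod (h t) \<le> D"
    using assms unfolding ess_bounded_def by blast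
  then have "AE t in T_meas. cmod (g t + h t) \<le> C + D"
    by eventually_elim (rule order_trans[OF norm_triangle_ineq], simp)
  then show ?thesis using assms unfolding ess_bounded_def by auto
qed

lemma ess_bounded_scale:
  assumes "ess_bounded g"
  shows "ess_bounded (\<lambda>t. a * g t)"
proof -
  obtain C where "AE t in T_meas. cmod (g t) \<le> C"
    using assms unfolding ess_bounded_def by blast
  then have "AE t in T_meas. cmod (a * g t) \<le> cmod a * C"
    by eventually_elim (simp add: norm_mult mult_left_mono)
  then show ?thesis using assms unfolding ess_bounded_def by auto
qed

lemma ess_bounded_diff: "ess_bounded g \<Longrightarrow> ess_bounded h \<Longrightarrow> ess_bounded (\<lambda>t. g t - h t)"
  using ess_bounded_add[of g "\<lambda>t. (-1) * h t"] ess_bounded_scale[of h "-1"] by simp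

lemma integrable_dist2:
  "ess_bounded g \<Longrightarrow> ess_bounded h \<Longrightarrow> integrable T_meas (\<lambda>t. (cmod (g t - h t))\<^sup>2)"
  using ess_bounded_L2_par[OF ess_bounded_diff] unfolding L2_par_def by blast

lemma dist2_add_le:
  assumes "ess_bounded g1" "ess_bounded g2" "ess_bounded h1" "ess_bounded h2"
  shows "dist2 (\<lambda>t. g1 t + g2 t) (\<lambda>t. h1 t + h2 t) \<le> 2 * dist2 g1 h1 + 2 * dist2 g2 h2"
proof -
  have "dist2 (\<lambda>t. g1 t + g2 t) (\<lambda>t. h1 t + h2 t)
      \<le> integral\<^sup>L T_meas (\<lambda>t. 2 * (cmod (g1 t - h1 t))\<^sup>2 + 2 * (cmod (g2 t - h2 t))\<^sup>2)"
    unfolding dist2_def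
  proof (rule integral_mono)
    show "integrable T_meas (\<lambda>t. (cmod (g1 t + g2 t - (h1 t + h2 t)))\<^sup>2)"
      using assms by (intro integrable_dist2 ess_bounded_add)
    show "integrable T_meas (\<lambda>t. 2 * (cmod (g1 t - h1 t))\<^sup>2 + 2 * (cmod (g2 t - h2 t))\<^sup>2)"
      using integrable_dist2[OF assms(1,3)] integrable_dist2[OF assms(2,4)] by auto
    fix t
    have "g1 t + g2 t - (h1 t + h2 t) = (g1 t - h1 t) + (g2 t - h2 t)"
      by simp
    then show "(cmod (g1 t + g2 t - (h1 t + h2 t)))\<^sup>2 \<le> 2 * (cmod (g1 t - h1 t))\<^sup>2 + 2 * (cmod (g2 t - h2 t))\<^sup>2"
      using norm_sq_add_le[of "g1 t - h1 t" "g2 t - h2 t"] by (simp only:)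
  qed
  also have "\<dots> = 2 * dist2 g1 h1 + 2 * dist2 g2 h2"
    unfolding dist2_def using integrable_dist2[OF assms(1,3)] integrable_dist2[OF assms(2,4)] by simp
  finally show ?thesis .
qed

lemma dist2_triangle:
  assumes "ess_bounded g" "ess_bounded h" "ess_bounded q"
  shows "dist2 g q \<le> 2 * dist2 g h + 2 * dist2 h q"
proof -
  have "dist2 (\<lambda>t. g t + h t) (\<lambda>t. h t + q t) = dist2 g q"
    unfolding dist2_def by (simp add: algebra_simps)
  then show ?thesis
    using dist2_add_le[OF assms(1,2,2,3)] by simp
qed

lemma dist2_le_uniform:
  assumes "ess_bounded g" "ess_bounded h" "AE t in T_meas. cmod (g t - h t) \<le> eta"
  shows "dist2 g h \<le> 2 * pi * eta\<^sup>2"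
proof -
  have "dist2 g h \<le> integral\<^sup>L T_meas (\<lambda>t. eta\<^sup>2)"
    unfolding dist2_def
  proof (rule integral_mono_AE)
    show "AE t in T_meas. (cmod (g t - h t))\<^sup>2 \<le> eta\<^sup>2"
      using assms(3) by eventually_elim (simp add: power_mono)
  qed (simp_all add: integrable_dist2[OF assms(1,2)] integrable_T_meas_const)
  then show ?thesis by simp
qed

lemma trig_approximable_trig_poly: "is_trig_poly p \<Longrightarrow> trig_approximable p"
  unfolding trig_approximable_def dist2_def by (auto intro: ess_bounded_trig_poly)

lemma trig_approximable_if_close:
  assumes "ess_bounded g" "\<And>e. e > 0 \<Longrightarrow> \<exists>h. trig_approximable h \<and> dist2 g h < e"
  shows "trig_approximable g"
  unfolding trig_approximable_def
proof (intro conjI allI impI)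
  fix e :: real
  assume "e > 0"
  then obtain h where h: "trig_approximable h" "dist2 g h < e / 4"
    using assms(2)[of "e / 4"] by auto
  then obtain p where p: "is_trig_poly p" "dist2 h p < e / 4"
    using \<open>e > 0\<close> unfolding trig_approximable_def by (meson zero_less_divide_iff zero_less_numeral)
  have "dist2 g p \<le> 2 * dist2 g h + 2 * dist2 h p"
    using assms(1) h(1) ess_bounded_trig_poly[OF p(1)]
    by (intro dist2_triangle) (auto simp: trig_approximable_def)
  also have "\<dots> < e"
    using h(2) p(2) by simp
  finally show "\<exists>p. is_trig_poly p \<and> dist2 g p < e"
    using p(1) by blast
qed (fact assms(1))

lemma trig_approximable_add:
  assumes "trig_approximable g1" "trig_approximable g2"
  shows "trig_approximable (\<lambda>t. g1 t + g2 t)"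
  unfolding trig_approximable_def
proof (intro conjI allI impI)
  show "ess_bounded (\<lambda>t. g1 t + g2 t)"
    using assms by (intro ess_bounded_add) (auto simp: trig_approximable_def)
  fix e :: real
  assume "e > 0"
  then obtain p1 p2 where p: "is_trig_poly p1" "dist2 g1 p1 < e / 4" "is_trig_poly p2" "dist2 g2 p2 < e / 4"
    using assms unfolding trig_approximable_def by (meson zero_less_divide_iff zero_less_numeral)
  have "dist2 (\<lambda>t. g1 t + g2 t) (\<lambda>t. p1 t + p2 t) \<le> 2 * dist2 g1 p1 + 2 * dist2 g2 p2"
    using assms ess_bounded_trig_poly[OF p(1)] ess_bounded_trig_poly[OF p(3)]
    by (intro dist2_add_le) (auto simp: trig_approximable_def)
  also have "\<dots> < e"
    using p by simp
  finally show "\<exists>p. is_trig_poly p \<and> dist2 (\<lambda>t. g1 t + g2 t) p < e"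
    using p is_trig_poly_add by blast
qed

lemma trig_approximable_scale:
  assumes "trig_approximable g"
  shows "trig_approximable (\<lambda>t. a * g t)"
  unfolding trig_approximable_def
proof (intro conjI allI impI)
  show "ess_bounded (\<lambda>t. a * g t)"
    using assms by (intro ess_bounded_scale) (auto simp: trig_approximable_def)
  fix e :: real
  assume "e > 0"
  define A where "A = (cmod a)\<^sup>2 + 1"
  have A: "A > 0"
    unfolding A_def by (simp add: add_nonneg_pos)
  obtain p where p: "is_trig_poly p" "dist2 g p < e / A"
    using assms \<open>e > 0\<close> A unfolding trig_approximable_def by (meson divide_pos_pos)
  have "dist2 (\<lambda>t. a * g t) (\<lambda>t. a * p t) = (cmod a)\<^sup>2 * dist2 g p"
    unfolding dist2_def by (simp add: right_diff_distrib[symmetric] norm_mult power_mult_distrib)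
  also have "\<dots> \<le> A * dist2 g p"
    unfolding A_def by (intro mult_right_mono) (auto simp: dist2_def)
  also have "\<dots> < e"
    using p(2) A by (simp add: field_simps)
  finally show "\<exists>p. is_trig_poly p \<and> dist2 (\<lambda>t. a * g t) p < e"
    using p(1) is_trig_poly_scale by blast
qed

lemma trig_approximable_sum:
  "finite I \<Longrightarrow> (\<And>i. i \<in> I \<Longrightarrow> trig_approximable (g i)) \<Longrightarrow> trig_approximable (\<lambda>t. \<Sum>i\<in>I. g i t)"
  by (induction I rule: finite_induct)
    (auto intro: trig_approximable_add trig_approximable_trig_poly is_trig_poly_const)

lemma trig_approximable_cong:
  assumes "trig_approximable g" "h \<in> borel_measurable T_meas" "\<And>t. t \<in> space T_meas \<Longrightarrow> g t = h t"
  shows "trig_approximable h"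
proof -
  have "dist2 h p = dist2 g p" for p
    unfolding dist2_def using assms(3) by (intro Bochner_Integration.integral_cong) auto
  moreover have "ess_bounded h"
  proof -
    obtain C where "AE t in T_meas. cmod (g t) \<le> C"
      using assms(1) unfolding trig_approximable_def ess_bounded_def by blast
    with AE_space have "AE t in T_meas. cmod (h t) \<le> C"
      by eventually_elim (use assms(3) in auto)
    then show ?thesis
      unfolding ess_bounded_def using assms(2) by blast
  qed
  ultimately show ?thesis
    using assms(1) unfolding trig_approximable_def by simp
qed

lemma trig_approximable_periodic_continuous:
  assumes cont: "continuous_on {0..2*pi} phi" and per: "phi 0 = phi (2*pi)"
  shows "trig_approximable phi"
proof -
  obtain C where C: "\<forall>t\<in>{0..2*pi}. cmod (phi t) \<le> C"
    using compact_imp_bounded[OF compact_continuous_image[OF cont compact_Icc]]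
    unfolding bounded_iff by auto
  have "AE t in T_meas. cmod (phi t) \<le> C"
    using C by (intro AE_I2) simp
  then have bounded: "ess_bounded phi"
    unfolding ess_bounded_def using measurable_T_meas_continuous[OF cont] by blast
  show ?thesis
  proof (rule trig_approximable_if_close[OF bounded])
    fix e :: real
    assume "e > 0"
    define eta where "eta = min 1 (e / (4 * pi))"
    have eta: "eta > 0" "eta \<le> 1" "eta \<le> e / (4 * pi)"
      unfolding eta_def using \<open>e > 0\<close> by auto
    obtain F c where F: "finite F" "\<And>t. t \<in> {0..2*pi} \<Longrightarrow> cmod (phi t - trig_poly F c t) < eta"
      using periodic_continuous_trig_approx[OF cont per eta(1)] by blast
    have trig: "is_trig_poly (trig_poly F c)"
      unfolding is_trig_poly_def using F(1) by blast
    have "dist2 phi (trig_poly F c) \<le> 2 * pi * eta\<^sup>2"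
      by (rule dist2_le_uniform[OF bounded ess_bounded_trig_poly[OF trig]])
        (use F(2) in \<open>auto intro!: AE_I2 less_imp_le\<close>)
    also have "\<dots> \<le> 2 * pi * eta"
      using eta by (intro mult_left_mono) (auto simp: power2_eq_square mult_le_cancel_right1)
    also have "\<dots> \<le> 2 * pi * (e / (4 * pi))"
      using eta by (intro mult_left_mono) auto
    also have "\<dots> < e"
      using \<open>e > 0\<close> by (simp add: field_simps)
    finally show "\<exists>h. trig_approximable h \<and> dist2 phi h < e"
      using trig_approximable_trig_poly[OF trig] by blast
  qed
qed

text \<open>Inner and outer regularity plus Urysohn's lemma; the bands \<open>[0, \<delta>]\<close> and
  \<open>[2\<pi> - \<delta>, 2\<pi>]\<close> are given up so that f vanishes at both ends.\<close>

lemma indicator_continuous_approx: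
  assumes "A \<in> sets lebesgue" "e > 0"
  obtains f :: "real \<Rightarrow> real" and E
  where "continuous_on UNIV f" "\<And>x. 0 \<le> f x \<and> f x \<le> 1" "f 0 = 0" "f (2*pi) = 0"
    "E \<in> lmeasurable" "measure lebesgue E < e" "\<And>t. t \<in> {0..2*pi} - E \<Longrightarrow> f t = indicator A t"
proof -
  define delta where "delta = min 1 (e / 4)"
  have delta: "delta > 0" "delta \<le> e / 4"
    unfolding delta_def using assms(2) by auto
  obtain K where K: "closed K" "K \<subseteq> A" "A - K \<in> lmeasurable" "emeasure lebesgue (A - K) < ennreal (e / 4)"
    using sets_lebesgue_inner_closed[OF assms(1), of "e / 4"] assms(2) by auto
  obtain U where U: "open U" "A \<subseteq> U" "U - A \<in> lmeasurable" "emeasure lebesgue (U - A) < ennreal (e / 4)"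
    using sets_lebesgue_outer_open[OF assms(1), of "e / 4"] assms(2) by auto
  define K' where "K' = K \<inter> {delta..2*pi - delta}"
  define V where "V = U \<inter> {delta/2<..<2*pi - delta/2}"
  have "closed K'"
    unfolding K'_def using K(1) by (intro closed_Int) auto
  moreover have "closed (- V)"
    unfolding V_def using U(1) by (intro closed_Compl open_Int) auto
  moreover have "K' \<inter> - V = {}"
    unfolding K'_def V_def using K(2) U(2) delta(1) by auto
  ultimately obtain f :: "real \<Rightarrow> real" where f: "continuous_on UNIV f" "\<And>x. f x \<in> closed_segment 1 0"
    "\<And>x. f x = 1 \<longleftrightarrow> x \<in> K'" "\<And>x. f x = 0 \<longleftrightarrow> x \<in> - V"
    using Urysohn_strong[of K' "- V" "1::real" 0] by auto
  define E where "E = (U - A) \<union> (A - K) \<union> {0..delta} \<union> {2*pi - delta..2*pi}"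
  have Icc: "{a..b} \<in> lmeasurable" for a b :: real
    using lmeasurable_cbox[of a b] by simp
  show ?thesis
  proof (rule that[of f E])
    show "continuous_on UNIV f"
      by (fact f(1))
    show "0 \<le> f x \<and> f x \<le> 1" for x
      using f(2)[of x] by (auto simp: closed_segment_eq_real_ivl)
    show "f 0 = 0" "f (2*pi) = 0"
      using f(4) delta(1) by (auto simp: V_def)
    show "E \<in> lmeasurable"
      unfolding E_def using U(3) K(3) Icc by (intro fmeasurable.Un) auto
    have "measure lebesgue E \<le> measure lebesgue (U - A) + measure lebesgue (A - K)
        + measure lebesgue {0..delta} + measure lebesgue {2*pi - delta..2*pi}"
      unfolding E_def using U(3) K(3) Icc by (smt (verit) fmeasurableD fmeasurable.Un measure_Un_le)
    also have "\<dots> < e / 4 + e / 4 + e / 4 + e / 4"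
      using U(3,4) K(3,4) delta assms(2) by (simp add: emeasure_eq_measure2 ennreal_less_iff)
    finally show "measure lebesgue E < e" by simp
    show "f t = indicator A t" if "t \<in> {0..2*pi} - E" for t
    proof (cases "t \<in> A")
      case True
      then have "t \<in> K'" using that unfolding E_def K'_def by auto
      then show ?thesis using True f(3) by simp
    next
      case False
      then have "t \<in> - V" using that unfolding E_def V_def by auto
      then show ?thesis using False f(4) by simp
    qed
  qed
qed

lemma dist2_le_measure:
  assumes "ess_bounded g" "ess_bounded h" "E \<in> lmeasurable"
    and "\<And>t. t \<in> {0..2*pi} \<Longrightarrow> cmod (g t - h t) \<le> 1"
    and "\<And>t. t \<in> {0..2*pi} - E \<Longrightarrow> g t = h t"
  shows "dist2 g h \<le> measure lebesgue E"
proof -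
  have ET: "E \<inter> {0..2*pi} \<in> sets T_meas"
    using assms(3) unfolding sets_T_meas_iff by (auto simp: fmeasurableD)
  have "dist2 g h \<le> integral\<^sup>L T_meas (indicator (E \<inter> {0..2*pi}))"
    unfolding dist2_def
  proof (rule integral_mono)
    show "integrable T_meas (\<lambda>t. (cmod (g t - h t))\<^sup>2)"
      using assms(1,2) by (rule integrable_dist2)
    show "integrable T_meas (indicator (E \<inter> {0..2*pi}) :: real \<Rightarrow> real)"
      by (rule integrable_T_meas_bounded[where C=1]) (auto intro!: AE_I2 borel_measurable_indicator ET simp: indicator_def)
    show "(cmod (g t - h t))\<^sup>2 \<le> indicator (E \<inter> {0..2*pi}) t" if "t \<in> space T_meas" for t
      using that assms(4,5)[of t] by (cases "t \<in> E") (simp_all add: power_le_one)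
  qed
  also have "\<dots> = measure lebesgue (E \<inter> {0..2*pi})"
    unfolding T_meas_def by (simp add: measure_restrict_space Int_absorb2)
  also have "\<dots> \<le> measure lebesgue E"
    using assms(3) by (intro measure_mono_fmeasurable) (auto simp: fmeasurableD)
  finally show ?thesis .
qed

lemma trig_approximable_indicator:
  assumes "A \<in> sets T_meas"
  shows "trig_approximable (\<lambda>t. complex_of_real (indicator A t))"
proof -
  have "A \<in> sets lebesgue"
    using assms sets_T_meas_iff by blast
  define ind where "ind t = complex_of_real (indicator A t)" for t
  have bounded: "ess_bounded ind"
    unfolding ess_bounded_def ind_def using assms
    by (intro conjI exI[of _ 1] AE_I2) (measurable, auto simp: indicator_def)
  show ?thesis
    unfolding ind_def[symmetric]
  proof (rule trig_approximable_if_close[OF bounded])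
    fix e :: real
    assume "e > 0"
    obtain f :: "real \<Rightarrow> real" and E :: "real set"
      where f: "continuous_on UNIV f" "\<And>x. 0 \<le> f x \<and> f x \<le> 1" "f 0 = 0" "f (2*pi) = 0"
      and E: "E \<in> lmeasurable" "measure lebesgue E < e" "\<And>t. t \<in> {0..2*pi} - E \<Longrightarrow> f t = indicator A t"
      using indicator_continuous_approx[OF \<open>A \<in> sets lebesgue\<close> \<open>e > 0\<close>] by blast
    define phi where "phi t = complex_of_real (f t)" for t
    have cont: "continuous_on {0..2*pi} phi"
      unfolding phi_def by (intro continuous_intros continuous_on_subset[OF f(1)]) auto
    have approx: "trig_approximable phi"
      by (rule trig_approximable_periodic_continuous[OF cont]) (simp add: phi_def f(3,4))
    have "dist2 ind phi \<le> measure lebesgue E"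
    proof (rule dist2_le_measure[OF bounded _ E(1)])
      show "ess_bounded phi"
        using approx by (simp add: trig_approximable_def)
      show "cmod (ind t - phi t) \<le> 1" for t
      proof -
        have "cmod (ind t - phi t) = \<bar>indicator A t - f t\<bar>"
          by (simp add: ind_def phi_def flip: of_real_diff)
        also have "\<dots> \<le> 1"
          using f(2)[of t] by (auto simp: indicator_def)
        finally show ?thesis .
      qed
      show "ind t = phi t" if "t \<in> {0..2*pi} - E" for t
        using E(3)[OF that] by (simp add: ind_def phi_def)
    qed
    then show "\<exists>h. trig_approximable h \<and> dist2 ind h < e"
      using approx E(2) by (intro exI[of _ phi]) auto
  qed
qed


lemma trig_approximable_finite_range:
  assumes "g \<in> borel_measurable T_meas" "finite (g ` space T_meas)"
  shows "trig_approximable g"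
proof -
  let ?V = "g ` space T_meas"
  let ?step = "\<lambda>t. \<Sum>v\<in>?V. v * complex_of_real (indicator {x \<in> space T_meas. g x = v} t)"
  have [measurable]: "g \<in> borel_measurable T_meas"
    by (fact assms(1))
  have "{x \<in> space T_meas. g x = v} \<in> sets T_meas" for v
    by measurable
  then have "trig_approximable ?step"
    using assms(2) by (intro trig_approximable_sum trig_approximable_scale trig_approximable_indicator)
  then show ?thesis
  proof (rule trig_approximable_cong[OF _ assms(1)])
    fix t
    assume t: "t \<in> space T_meas"
    then have "?step t = (\<Sum>v\<in>?V. if v = g t then v else 0)"
      by (intro sum.cong refl) (auto simp: indicator_def)
    then show "?step t = g t"
      using assms(2) t by (simp add: sum.delta)
  qed
qed

text \<open>The clamp to [-1, 1] keeps the range finite.\<close>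

definition quantize :: "nat \<Rightarrow> real \<Rightarrow> real" where
  "quantize N r = of_int \<lfloor>real N * max (- 1) (min 1 r)\<rfloor> / real N"

lemma mono_quantize: "mono (quantize N)"
  unfolding quantize_def mono_def
  by (intro allI impI divide_right_mono of_int_le_iff[THEN iffD2] floor_mono mult_left_mono max.mono min.mono) auto

lemma measurable_quantize [measurable]:
  "f \<in> borel_measurable M \<Longrightarrow> (\<lambda>x. quantize N (f x)) \<in> borel_measurable M"
  using measurable_compose[OF _ borel_measurable_mono[OF mono_quantize]] .

lemma quantize_error:
  assumes "N > 0" "\<bar>r\<bar> \<le> 1"
  shows "\<bar>r - quantize N r\<bar> \<le> 1 / real N"
proof -
  have "max (- 1) (min 1 r) = r"
    using assms(2) by (auto simp: abs_le_iff)
  then have "quantize N r = of_int \<lfloor>real N * r\<rfloor> / real N"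
    unfolding quantize_def by simp
  moreover have "r - of_int \<lfloor>real N * r\<rfloor> / real N = (real N * r - of_int \<lfloor>real N * r\<rfloor>) / real N"
    using assms(1) by (simp add: field_simps)
  moreover have "0 \<le> real N * r - of_int \<lfloor>real N * r\<rfloor>" "real N * r - of_int \<lfloor>real N * r\<rfloor> \<le> 1"
    by linarith+
  ultimately show ?thesis
    using assms(1) by (simp add: divide_right_mono)
qed

lemma quantize_range: "quantize N r \<in> (\<lambda>j. of_int j / real N) ` {- int N..int N}"
proof -
  define x where "x = max (- 1) (min 1 r)"
  have "real N * (- 1) \<le> real N * x" "real N * x \<le> real N * 1"
    unfolding x_def by (intro mult_left_mono; simp)+
  then show ?thesis
    unfolding quantize_def x_def[symmetric]
    by (intro image_eqI[where x="\<lfloor>real N * x\<rfloor>"]) (auto simp: le_floor_iff floor_le_iff)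
qed

lemma trig_approximable_quantized:
  assumes "G \<in> borel_measurable T_meas"
  shows "trig_approximable (\<lambda>t. complex_of_real (quantize N (Re (G t))) + \<i> * complex_of_real (quantize N (Im (G t))))"
    (is "trig_approximable ?h")
proof (rule trig_approximable_finite_range)
  let ?grid = "(\<lambda>j. of_int j / real N) ` {- int N..int N}"
  have "?h t \<in> (\<lambda>(x, y). complex_of_real x + \<i> * complex_of_real y) ` (?grid \<times> ?grid)" for t
  proof (rule rev_image_eqI)
    show "(quantize N (Re (G t)), quantize N (Im (G t))) \<in> ?grid \<times> ?grid"
      by (intro SigmaI quantize_range)
  qed simp
  then have "?h ` space T_meas \<subseteq> (\<lambda>(x, y). complex_of_real x + \<i> * complex_of_real y) ` (?grid \<times> ?grid)"
    by (intro image_subsetI)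
  moreover have "finite (?grid \<times> ?grid)"
    by simp
  ultimately show "finite (?h ` space T_meas)"
    by (rule finite_subset[OF _ finite_imageI])
  show "?h \<in> borel_measurable T_meas"
    using assms by measurable
qed

lemma trig_approximable_bounded:
  assumes "G \<in> borel_measurable T_meas" "AE t in T_meas. cmod (G t) \<le> 1"
  shows "trig_approximable G"
proof (rule trig_approximable_if_close)
  show bounded: "ess_bounded G"
    unfolding ess_bounded_def using assms by blast
  fix e :: real
  assume "e > 0"
  define N :: nat where "N = nat \<lceil>8 * pi / e\<rceil> + 1"
  have N: "N > 0" "8 * pi / e < real N"
    unfolding N_def by linarith+
  then have N_large: "8 * pi / real N < e"
    using \<open>e > 0\<close> by (simp add: field_simps)
  define eps where "eps = 1 / real N"
  have eps: "0 < eps" "eps \<le> 1"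
    unfolding eps_def using N(1) by auto
  define h where "h t = complex_of_real (quantize N (Re (G t))) + \<i> * complex_of_real (quantize N (Im (G t)))" for t
  have approx: "trig_approximable h"
    unfolding h_def using assms(1) by (rule trig_approximable_quantized)
  have "AE t in T_meas. cmod (G t - h t) \<le> 2 * eps"
    using assms(2)
  proof eventually_elim
    case (elim t)
    then have "\<bar>Re (G t)\<bar> \<le> 1" "\<bar>Im (G t)\<bar> \<le> 1"
      using abs_Re_le_cmod abs_Im_le_cmod order_trans by blast+
    then have "\<bar>Re (G t - h t)\<bar> \<le> eps" "\<bar>Im (G t - h t)\<bar> \<le> eps"
      unfolding h_def eps_def using N(1) by (simp_all add: quantize_error)
    then show ?case
      using cmod_le[of "G t - h t"] by linarith
  qed
  then have "dist2 G h \<le> 2 * pi * (2 * eps)\<^sup>2"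
    using bounded approx by (intro dist2_le_uniform) (auto simp: trig_approximable_def)
  also have "\<dots> \<le> 8 * pi * eps"
    using eps by (simp add: power2_eq_square mult_le_cancel_left1)
  also have "\<dots> < e"
    using N_large by (simp add: eps_def)
  finally show "\<exists>h. trig_approximable h \<and> dist2 G h < e"
    using approx by blast
qed

section \<open>The zeroth Fourier coefficient of a product\<close>

lemma mult_le_weighted_squares:
  fixes x y lam :: real
  assumes "lam > 0"
  shows "x * y \<le> (lam * x\<^sup>2 + y\<^sup>2 / lam) / 2"
proof -
  have "0 \<le> (lam * x - y)\<^sup>2 / lam"
    using assms by simp
  also have "(lam * x - y)\<^sup>2 / lam = lam * x\<^sup>2 + y\<^sup>2 / lam - 2 * (x * y)"
    using assms by (simp add: power2_diff power2_eq_square field_simps)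
  finally show ?thesis by simp
qed

lemma norm_integral_mult_le:
  assumes "L2_par h" "L2_par k" "lam > 0"
  shows "cmod (integral\<^sup>L T_meas (\<lambda>t. h t * k t))
    \<le> (lam * integral\<^sup>L T_meas (\<lambda>t. (cmod (h t))\<^sup>2) + integral\<^sup>L T_meas (\<lambda>t. (cmod (k t))\<^sup>2) / lam) / 2"
proof -
  have "cmod (integral\<^sup>L T_meas (\<lambda>t. h t * k t)) \<le> integral\<^sup>L T_meas (\<lambda>t. cmod (h t * k t))"
    by (rule integral_norm_bound)
  also have "\<dots> \<le> integral\<^sup>L T_meas (\<lambda>t. (lam * (cmod (h t))\<^sup>2 + (cmod (k t))\<^sup>2 / lam) / 2)"
  proof (rule integral_mono)
    show "integrable T_meas (\<lambda>t. cmod (h t * k t))"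
      using integrable_L2_par_mult[OF assms(1,2)] by simp
    show "integrable T_meas (\<lambda>t. (lam * (cmod (h t))\<^sup>2 + (cmod (k t))\<^sup>2 / lam) / 2)"
      using assms(1,2) unfolding L2_par_def by auto
    show "cmod (h t * k t) \<le> (lam * (cmod (h t))\<^sup>2 + (cmod (k t))\<^sup>2 / lam) / 2" for t
      unfolding norm_mult by (rule mult_le_weighted_squares[OF assms(3)])
  qed
  also have "\<dots> = (lam * integral\<^sup>L T_meas (\<lambda>t. (cmod (h t))\<^sup>2) + integral\<^sup>L T_meas (\<lambda>t. (cmod (k t))\<^sup>2) / lam) / 2"
    using assms(1,2) unfolding L2_par_def by simp
  finally show ?thesis .
qed

lemma norm_sum_fcoeff_mult_le:
  assumes "L2_par h" "L2_par k" "finite F" "lam > 0"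
  shows "2 * pi * cmod (\<Sum>n\<in>F. fcoeff h n * fcoeff k (- n))
    \<le> (lam * integral\<^sup>L T_meas (\<lambda>t. (cmod (h t))\<^sup>2) + integral\<^sup>L T_meas (\<lambda>t. (cmod (k t))\<^sup>2) / lam) / 2"
proof -
  have bessel_k: "2 * pi * (\<Sum>n\<in>F. (cmod (fcoeff k (- n)))\<^sup>2) \<le> integral\<^sup>L T_meas (\<lambda>t. (cmod (k t))\<^sup>2)"
    using bessel_inequality[OF assms(2) finite_imageI[OF assms(3), of uminus]]
    by (simp add: sum.reindex inj_on_def)
  have "cmod (\<Sum>n\<in>F. fcoeff h n * fcoeff k (- n)) \<le> (\<Sum>n\<in>F. cmod (fcoeff h n) * cmod (fcoeff k (- n)))"
    by (rule order_trans[OF norm_sum]) (simp add: norm_mult)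
  also have "\<dots> \<le> (\<Sum>n\<in>F. (lam * (cmod (fcoeff h n))\<^sup>2 + (cmod (fcoeff k (- n)))\<^sup>2 / lam) / 2)"
    by (intro sum_mono mult_le_weighted_squares assms(4))
  also have "\<dots> = (lam * (\<Sum>n\<in>F. (cmod (fcoeff h n))\<^sup>2) + (\<Sum>n\<in>F. (cmod (fcoeff k (- n)))\<^sup>2) / lam) / 2"
    by (simp only: sum_divide_distrib[symmetric] sum.distrib sum_distrib_left[symmetric])
  finally have "2 * pi * cmod (\<Sum>n\<in>F. fcoeff h n * fcoeff k (- n))
      \<le> 2 * pi * ((lam * (\<Sum>n\<in>F. (cmod (fcoeff h n))\<^sup>2) + (\<Sum>n\<in>F. (cmod (fcoeff k (- n)))\<^sup>2) / lam) / 2)"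
    by (intro mult_left_mono) auto
  also have "\<dots> = (lam * (2 * pi * (\<Sum>n\<in>F. (cmod (fcoeff h n))\<^sup>2)) + 2 * pi * (\<Sum>n\<in>F. (cmod (fcoeff k (- n)))\<^sup>2) / lam) / 2"
    using assms(4) by (simp add: field_simps)
  also have "\<dots> \<le> (lam * integral\<^sup>L T_meas (\<lambda>t. (cmod (h t))\<^sup>2) + integral\<^sup>L T_meas (\<lambda>t. (cmod (k t))\<^sup>2) / lam) / 2"
    using bessel_inequality[OF assms(1,3)] bessel_k assms(4)
    by (intro divide_right_mono add_mono mult_left_mono) auto
  finally show ?thesis .
qed

text \<open>The defect involves only h = p - G: \<open>(p k)\<^sup>^(0)\<close> sees only the coefficients of p of
  index \<open>\<le> 0\<close>, and the coefficients of G of negative index vanish.\<close>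

lemma fcoeff0_mult_defect:
  fixes c :: "int \<Rightarrow> complex"
  assumes G: "H2_par G" and k: "H2_par k" and F: "finite F"
  defines "h \<equiv> \<lambda>t. trig_poly F c t - G t"
  defines "F' \<equiv> insert 0 {n \<in> F. n < 0}"
  shows "fcoeff (\<lambda>t. G t * k t) 0 - fcoeff G 0 * fcoeff k 0
    = (\<Sum>n\<in>F'. fcoeff h n * fcoeff k (- n)) - fcoeff (\<lambda>t. h t * k t) 0"
proof -
  let ?p = "trig_poly F c"
  have L2: "L2_par G" "L2_par k" "L2_par ?p" "L2_par h"
    using G k unfolding h_def by (auto intro: L2_par_trig_poly L2_par_diff simp: H2_par_def)
  have k_nonpos: "n \<le> 0" if "fcoeff k (- n) \<noteq> 0" for n
    using k that by (force simp: H2_par_def)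
  have fin: "finite F'"
    unfolding F'_def using F by simp
  have fcoeff_h: "fcoeff h n = fcoeff ?p n - fcoeff G n" for n
    unfolding h_def by (rule fcoeff_diff) (use L2 in \<open>auto intro: L2_par_integrable\<close>)
  have "fcoeff (\<lambda>t. G t * k t) 0 = fcoeff (\<lambda>t. k t * ?p t) 0 - fcoeff (\<lambda>t. h t * k t) 0"
    unfolding h_def using integrable_L2_par_mult[OF L2(2,3)] integrable_L2_par_mult[OF L2(4,2)]
    by (subst fcoeff_diff[symmetric]) (auto simp: h_def algebra_simps)
  also have "fcoeff (\<lambda>t. k t * ?p t) 0 = (\<Sum>n\<in>F. c n * fcoeff k (- n))"
    using integral_mult_trig_poly[OF L2_par_integrable[OF L2(2)] F] by (simp add: fcoeff_def)
  also have "\<dots> = (\<Sum>n\<in>F'. fcoeff ?p n * fcoeff k (- n))"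
  proof -
    have "(\<Sum>n\<in>F. c n * fcoeff k (- n)) = (\<Sum>n\<in>F \<union> F'. fcoeff ?p n * fcoeff k (- n))"
      using F fin by (intro sum.mono_neutral_cong_left) (auto simp: fcoeff_trig_poly)
    also have "\<dots> = (\<Sum>n\<in>F'. fcoeff ?p n * fcoeff k (- n))"
      using F fin unfolding F'_def
      by (intro sum.mono_neutral_right) (auto dest: k_nonpos)
    finally show ?thesis .
  qed
  also have "\<dots> = (\<Sum>n\<in>F'. fcoeff h n * fcoeff k (- n) + fcoeff G n * fcoeff k (- n))"
    by (simp add: fcoeff_h algebra_simps)
  also have "\<dots> = (\<Sum>n\<in>F'. fcoeff h n * fcoeff k (- n)) + (\<Sum>n\<in>F'. fcoeff G n * fcoeff k (- n))"
    by (rule sum.distrib)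
  also have "(\<Sum>n\<in>F'. fcoeff G n * fcoeff k (- n)) = fcoeff G 0 * fcoeff k 0"
    using G F unfolding F'_def by (simp add: H2_par_def)
  finally show ?thesis
    by simp
qed

lemma norm_fcoeff0_mult_defect_le:
  fixes c :: "int \<Rightarrow> complex"
  assumes G: "H2_par G" and k: "H2_par k" and "finite F" "lam > 0"
  shows "2 * pi * cmod (fcoeff (\<lambda>t. G t * k t) 0 - fcoeff G 0 * fcoeff k 0)
    \<le> lam * dist2 G (trig_poly F c) + integral\<^sup>L T_meas (\<lambda>t. (cmod (k t))\<^sup>2) / lam"
proof -
  define h where "h t = trig_poly F c t - G t" for t
  define F' where "F' = insert 0 {n \<in> F. n < 0}"
  have "finite F'"
    unfolding F'_def using assms(3) by simp
  have L2: "L2_par h" "L2_par k"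
    unfolding h_def using G k by (auto intro!: L2_par_diff L2_par_trig_poly simp: H2_par_def)
  have E: "integral\<^sup>L T_meas (\<lambda>t. (cmod (h t))\<^sup>2) = dist2 G (trig_poly F c)"
    unfolding h_def dist2_def by (simp add: norm_minus_commute)
  have "2 * pi * cmod (fcoeff (\<lambda>t. G t * k t) 0 - fcoeff G 0 * fcoeff k 0)
      = 2 * pi * cmod ((\<Sum>n\<in>F'. fcoeff h n * fcoeff k (- n)) - fcoeff (\<lambda>t. h t * k t) 0)"
    using fcoeff0_mult_defect[OF G k assms(3), of c] unfolding h_def F'_def by simp
  also have "\<dots> \<le> 2 * pi * (cmod (\<Sum>n\<in>F'. fcoeff h n * fcoeff k (- n)) + cmod (fcoeff (\<lambda>t. h t * k t) 0))"
    by (intro mult_left_mono norm_triangle_ineq4) simp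
  also have "\<dots> = 2 * pi * cmod (\<Sum>n\<in>F'. fcoeff h n * fcoeff k (- n)) + cmod (integral\<^sup>L T_meas (\<lambda>t. h t * k t))"
    by (simp add: fcoeff_def norm_mult norm_divide distrib_left)
  also have "\<dots> \<le> lam * dist2 G (trig_poly F c) + integral\<^sup>L T_meas (\<lambda>t. (cmod (k t))\<^sup>2) / lam"
    using add_mono[OF norm_sum_fcoeff_mult_le[OF L2 \<open>finite F'\<close> assms(4)] norm_integral_mult_le[OF L2 assms(4)]]
    unfolding E by simp
  finally show ?thesis .
qed

lemma fcoeff0_mult_H2:
  assumes G: "H2_par G" "AE t in T_meas. cmod (G t) \<le> 1" and k: "H2_par k"
  shows "fcoeff (\<lambda>t. G t * k t) 0 = fcoeff G 0 * fcoeff k 0"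
proof -
  define D where "D = 2 * pi * cmod (fcoeff (\<lambda>t. G t * k t) 0 - fcoeff G 0 * fcoeff k 0)"
  define K where "K = integral\<^sup>L T_meas (\<lambda>t. (cmod (k t))\<^sup>2)"
  have "K \<ge> 0"
    unfolding K_def by simp
  have approx: "trig_approximable G"
    using G by (intro trig_approximable_bounded) (auto simp: H2_par_def)
  have bound: "D \<le> K / lam" if "lam > 0" for lam
  proof (rule field_le_epsilon)
    fix e :: real
    assume "e > 0"
    then have "e / lam > 0"
      using that by simp
    then obtain p where p: "is_trig_poly p" "dist2 G p < e / lam"
      using approx unfolding trig_approximable_def by blast
    then obtain F c where F: "finite F" "p = trig_poly F c"
      unfolding is_trig_poly_def by blast
    have "D \<le> lam * dist2 G p + K / lam"
      unfolding D_def K_def F(2) by (rule norm_fcoeff0_mult_defect_le[OF G(1) k F(1) that])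
    also have "lam * dist2 G p < e"
      using p(2) that by (simp add: field_simps)
    finally show "D \<le> K / lam + e"
      by simp
  qed
  have "D \<le> 0"
  proof (rule field_le_epsilon)
    fix e :: real
    assume "e > 0"
    then have "(K + 1) / e > 0"
      using \<open>K \<ge> 0\<close> by simp
    then have "D \<le> K / ((K + 1) / e)"
      by (rule bound)
    also have "\<dots> \<le> e"
      using \<open>K \<ge> 0\<close> \<open>e > 0\<close> by (simp add: field_simps)
    finally show "D \<le> 0 + e"
      by simp
  qed
  then show ?thesis
    unfolding D_def using pi_gt_zero by (simp add: mult_le_0_iff)
qed

lemma ae_eq_fcoeff0_if_unimodular:
  assumes "G \<in> borel_measurable T_meas" "AE t in T_meas. cmod (G t) = 1" "cmod (fcoeff G 0) = 1"
  shows "AE t in T_meas. G t = fcoeff G 0"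
proof -
  have "L2_par G"
    using assms(1,2) by (intro L2_par_bounded[where C=1]) (auto elim: eventually_mono)
  have "integral\<^sup>L T_meas (\<lambda>t. (cmod (G t))\<^sup>2) = integral\<^sup>L T_meas (\<lambda>t. 1::real)"
    using assms(1,2) by (intro integral_cong_AE) (auto elim: eventually_mono)
  then have "integral\<^sup>L T_meas (\<lambda>t. (cmod (G t - fcoeff G 0))\<^sup>2) = 0"
    using integral_norm_sub_fourier_sum[OF \<open>L2_par G\<close>, of "{0}"] assms(3)
    by (simp add: trig_poly_def)
  moreover have "L2_par (\<lambda>t. fcoeff G 0)"
    by (rule L2_par_bounded[where C="cmod (fcoeff G 0)"]) auto
  with \<open>L2_par G\<close> have "L2_par (\<lambda>t. G t - fcoeff G 0)"
    by (rule L2_par_diff)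
  then have "integrable T_meas (\<lambda>t. (cmod (G t - fcoeff G 0))\<^sup>2)"
    by (simp add: L2_par_def)
  ultimately have "AE t in T_meas. (cmod (G t - fcoeff G 0))\<^sup>2 = 0"
    by (subst integral_nonneg_eq_0_iff_AE[symmetric]) auto
  then show ?thesis
    by (auto elim: eventually_mono)
qed

lemma norm_fcoeff0_less_1:
  assumes "G \<in> borel_measurable T_meas" "AE t in T_meas. cmod (G t) = 1"
    and "\<nexists>c. AE t in T_meas. G t = c"
  shows "cmod (fcoeff G 0) < 1"
proof -
  have "cmod (fcoeff G 0) \<le> 1"
    using assms(1,2) by (intro norm_fcoeff_le) (auto elim: eventually_mono)
  moreover have "cmod (fcoeff G 0) \<noteq> 1"
    using ae_eq_fcoeff0_if_unimodular[OF assms(1,2)] assms(3) by blast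
  ultimately show ?thesis
    by simp
qed

section \<open>One step of layer stripping\<close>

lemma step_rel_iff:
  "step_rel a b y c d \<longleftrightarrow> (AE t in T_meas.
     c (cis t) = complex_of_real (1 / sqrt (1 + (cmod y)\<^sup>2)) * (a (cis t) + y * cnj (b (cis t))) \<and>
     d (cis t) * cis t = complex_of_real (1 / sqrt (1 + (cmod y)\<^sup>2)) * (b (cis t) - y * cnj (a (cis t))))"
  unfolding step_rel_def ae_T_def pmult_def by simp

lemma Hbar_iff:
  "(a, b) \<in> Hbar \<longleftrightarrow> meas_T a \<and> meas_T b \<and>
     (AE t in T_meas. a (cis t) * cnj (a (cis t)) + b (cis t) * cnj (b (cis t)) = 1) \<and>
     H2_par (\<lambda>t. cnj (a (cis t))) \<and> at_inf a \<in> \<real> \<and> Re (at_inf a) > 0 \<and> H2_par (\<lambda>t. b (cis t))"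
  unfolding Hbar_def Lset_def ae_T_def by (auto simp: H2_D_iff H2_Dstar_iff)

lemma Hbar_measurable:
  assumes "(a, b) \<in> Hbar"
  shows "(\<lambda>t. a (cis t)) \<in> borel_measurable T_meas" "(\<lambda>t. b (cis t)) \<in> borel_measurable T_meas"
  using assms by (simp_all add: Hbar_iff meas_T_def)

lemma fcoeff0_cnj_eq_at_inf:
  assumes "(a, b) \<in> Hbar"
  shows "fcoeff (\<lambda>t. cnj (a (cis t))) 0 = complex_of_real (Re (at_inf a))"
proof -
  have "at_inf a = complex_of_real (Re (at_inf a))"
    using assms by (simp add: Hbar_iff complex_is_Real_iff complex_eq_iff)
  then show ?thesis
    by (metis at_inf_eq_fcoeff complex_cnj_cnj complex_cnj_complex_of_real)
qed

lemma norm_le_1_if_unit: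
  assumes "a * cnj a + b * cnj b = (1::complex)"
  shows "cmod a \<le> 1"
proof -
  have "complex_of_real ((cmod a)\<^sup>2 + (cmod b)\<^sup>2) = 1"
    using assms by (simp only: of_real_add complex_norm_square)
  then have "(cmod a)\<^sup>2 + (cmod b)\<^sup>2 = 1"
    using of_real_eq_1_iff by blast
  then have "(cmod a)\<^sup>2 \<le> 1"
    using zero_le_power2[of "cmod b"] by linarith
  then show ?thesis
    by (simp add: power_le_one_iff abs_square_le_1)
qed

lemma Re_at_inf_le_1:
  assumes "(a, b) \<in> Hbar"
  shows "Re (at_inf a) \<le> 1"
proof -
  have "cmod (fcoeff (\<lambda>t. cnj (a (cis t))) 0) \<le> 1"
    using assms by (intro norm_fcoeff_le) (auto simp: Hbar_iff meas_T_def norm_le_1_if_unit elim: eventually_mono)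
  then show ?thesis
    using fcoeff0_cnj_eq_at_inf[OF assms] by simp
qed

definition layer_coeff :: "(complex \<Rightarrow> complex) \<Rightarrow> (complex \<Rightarrow> complex) \<Rightarrow> complex" where
  "layer_coeff a b = fcoeff (\<lambda>t. b (cis t)) 0 / complex_of_real (Re (at_inf a))"

lemma step_preserves_unit:
  fixes al be y w :: complex
  assumes "al * cnj al + be * cnj be = 1" "w * cnj w = 1"
  defines "s \<equiv> complex_of_real (1 / sqrt (1 + (cmod y)\<^sup>2))"
  shows "(s * (al + y * cnj be)) * cnj (s * (al + y * cnj be))
       + (s * (be - y * cnj al) * w) * cnj (s * (be - y * cnj al) * w) = 1"
proof -
  have "(s * (be - y * cnj al) * w) * cnj (s * (be - y * cnj al) * w)
      = (s * (be - y * cnj al)) * cnj (s * (be - y * cnj al)) * (w * cnj w)"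
    by (simp add: mult_ac)
  then have w: "(s * (be - y * cnj al) * w) * cnj (s * (be - y * cnj al) * w)
      = (s * (be - y * cnj al)) * cnj (s * (be - y * cnj al))"
    using assms(2) by simp
  define r where "r = sqrt (1 + (cmod y)\<^sup>2)"
  have "r > 0"
    unfolding r_def by (simp add: add_pos_nonneg)
  have "(al + y * cnj be) * cnj (al + y * cnj be) + (be - y * cnj al) * cnj (be - y * cnj al)
      = (1 + y * cnj y) * (al * cnj al + be * cnj be)"
    by (simp add: algebra_simps)
  also have "\<dots> = complex_of_real (r\<^sup>2)"
    using assms(1) unfolding r_def by (simp add: complex_norm_square[of y, symmetric])
  finally have "s * cnj s * ((al + y * cnj be) * cnj (al + y * cnj be) + (be - y * cnj al) * cnj (be - y * cnj al))
      = complex_of_real ((1 / r)\<^sup>2 * r\<^sup>2)"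
    unfolding s_def r_def[symmetric] by (simp add: power2_eq_square)
  also have "\<dots> = 1"
    using \<open>r > 0\<close> by (simp add: power_divide)
  finally show ?thesis
    unfolding w by (simp add: algebra_simps)
qed

lemma at_inf_step_fst:
  assumes ab: "(a, b) \<in> Hbar" and "meas_T c"
    and c: "AE t in T_meas. c (cis t) = complex_of_real (1 / sqrt (1 + (cmod y)\<^sup>2)) * (a (cis t) + y * cnj (b (cis t)))"
    and b0: "fcoeff (\<lambda>t. b (cis t)) 0 = y * complex_of_real (Re (at_inf a))"
  shows "at_inf c = complex_of_real (Re (at_inf a) * sqrt (1 + (cmod y)\<^sup>2))"
proof -
  define s where "s = sqrt (1 + (cmod y)\<^sup>2)"
  have "s > 0"
    unfolding s_def by (simp add: add_pos_nonneg)
  have H2: "H2_par (\<lambda>t. cnj (a (cis t)))" "H2_par (\<lambda>t. b (cis t))"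
    using ab by (auto simp: Hbar_iff)
  note [measurable] = Hbar_measurable[OF ab]
  have [measurable]: "(\<lambda>t. c (cis t)) \<in> borel_measurable T_meas"
    using \<open>meas_T c\<close> by (simp add: meas_T_def)
  have "fcoeff (\<lambda>t. cnj (c (cis t))) 0
      = fcoeff (\<lambda>t. complex_of_real (1/s) * cnj (a (cis t)) + (complex_of_real (1/s) * cnj y) * b (cis t)) 0"
    using c unfolding s_def[symmetric]
    by (intro fcoeff_cong) (measurable, auto simp: algebra_simps elim: eventually_mono)
  also have "\<dots> = complex_of_real (1/s) * complex_of_real (Re (at_inf a))
      + (complex_of_real (1/s) * cnj y) * (y * complex_of_real (Re (at_inf a)))"
  proof -
    have i1: "integrable T_meas (\<lambda>t. complex_of_real (1/s) * cnj (a (cis t)))"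
      by (intro L2_par_integrable L2_par_scale H2_parD(1) H2(1))
    have i2: "integrable T_meas (\<lambda>t. (complex_of_real (1/s) * cnj y) * b (cis t))"
      by (intro L2_par_integrable L2_par_scale H2_parD(1) H2(2))
    show ?thesis
      unfolding fcoeff_add[OF i1 i2] fcoeff_scale fcoeff0_cnj_eq_at_inf[OF ab] b0 ..
  qed
  also have "\<dots> = complex_of_real (1/s) * complex_of_real (Re (at_inf a)) * (1 + y * cnj y)"
    by (simp add: algebra_simps add_divide_distrib)
  also have "\<dots> = complex_of_real (Re (at_inf a) * ((1 + (cmod y)\<^sup>2) / s))"
    unfolding complex_norm_square[symmetric] by simp
  also have "(1 + (cmod y)\<^sup>2) / s = s"
    using \<open>s > 0\<close> unfolding s_def by (simp add: field_simps)
  finally show ?thesis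
    by (simp add: at_inf_eq_fcoeff s_def)
qed

lemma fcoeff0_snd_if_step:
  assumes ab: "(a, b) \<in> Hbar" and "meas_T d" "H2_par (\<lambda>t. d (cis t))"
    and d: "AE t in T_meas. d (cis t) * cis t = complex_of_real (1 / sqrt (1 + (cmod y)\<^sup>2)) * (b (cis t) - y * cnj (a (cis t)))"
  shows "fcoeff (\<lambda>t. b (cis t)) 0 = y * complex_of_real (Re (at_inf a))"
proof -
  define s where "s = sqrt (1 + (cmod y)\<^sup>2)"
  have "s > 0"
    unfolding s_def by (simp add: add_pos_nonneg)
  have H2: "H2_par (\<lambda>t. cnj (a (cis t)))" "H2_par (\<lambda>t. b (cis t))"
    using ab by (auto simp: Hbar_iff)
  have integrable_b: "integrable T_meas (\<lambda>t. b (cis t))"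
    by (intro L2_par_integrable H2_parD(1) H2(2))
  have integrable_ya: "integrable T_meas (\<lambda>t. y * cnj (a (cis t)))"
    by (intro L2_par_integrable L2_par_scale H2_parD(1) H2(1))
  note [measurable] = Hbar_measurable[OF ab]
  have [measurable]: "(\<lambda>t. d (cis t)) \<in> borel_measurable T_meas"
    using \<open>meas_T d\<close> by (simp add: meas_T_def)
  have "0 = fcoeff (\<lambda>t. d (cis t) * cis t) 0"
    using assms(3) unfolding fcoeff_mult_cis H2_par_def by simp
  also have "\<dots> = fcoeff (\<lambda>t. complex_of_real (1/s) * (b (cis t) - y * cnj (a (cis t)))) 0"
    by (rule fcoeff_cong) (measurable, use d[unfolded s_def[symmetric]] in \<open>auto elim: eventually_mono\<close>)
  also have "\<dots> = complex_of_real (1/s) * (fcoeff (\<lambda>t. b (cis t)) 0 - y * complex_of_real (Re (at_inf a)))"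
    by (simp only: fcoeff_scale fcoeff_diff[OF integrable_b integrable_ya] fcoeff0_cnj_eq_at_inf[OF ab])
  finally show ?thesis
    using \<open>s > 0\<close> by simp
qed

lemma step_unique:
  assumes "(a, b) \<in> Hbar" "(c, d) \<in> Hbar" "step_rel a b y c d"
  shows "y = layer_coeff a b" "Re (at_inf c) = Re (at_inf a) * sqrt (1 + (cmod y)\<^sup>2)"
proof -
  have cd: "meas_T c" "meas_T d" "H2_par (\<lambda>t. d (cis t))"
    using assms(2) by (auto simp: Hbar_iff)
  note st = assms(3)[unfolded step_rel_iff]
  have b0: "fcoeff (\<lambda>t. b (cis t)) 0 = y * complex_of_real (Re (at_inf a))"
    by (rule fcoeff0_snd_if_step[OF assms(1) cd(2,3)]) (use st in \<open>auto elim: eventually_mono\<close>)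
  moreover have "complex_of_real (Re (at_inf a)) \<noteq> 0"
    using assms(1) unfolding Hbar_iff by (metis of_real_eq_0_iff less_irrefl)
  ultimately show "y = layer_coeff a b"
    unfolding layer_coeff_def by simp
  have "at_inf c = complex_of_real (Re (at_inf a) * sqrt (1 + (cmod y)\<^sup>2))"
    by (rule at_inf_step_fst[OF assms(1) cd(1) _ b0]) (use st in \<open>auto elim: eventually_mono\<close>)
  then show "Re (at_inf c) = Re (at_inf a) * sqrt (1 + (cmod y)\<^sup>2)"
    by simp
qed

lemma fcoeff0_snd_eq_layer_coeff:
  assumes "(a, b) \<in> Hbar"
  shows "fcoeff (\<lambda>t. b (cis t)) 0 = layer_coeff a b * complex_of_real (Re (at_inf a))"
proof -
  have "complex_of_real (Re (at_inf a)) \<noteq> 0"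
    using assms unfolding Hbar_iff by (metis of_real_eq_0_iff less_irrefl)
  then show ?thesis
    unfolding layer_coeff_def by simp
qed

lemma H2_par_step_snd:
  assumes ab: "(a, b) \<in> Hbar"
    and b0: "fcoeff (\<lambda>t. b (cis t)) 0 = y * complex_of_real (Re (at_inf a))"
  shows "H2_par (\<lambda>t. s * (b (cis t) - y * cnj (a (cis t))) * cis (- t))"
proof (rule H2_par_mult_cis_uminus)
  have H2: "H2_par (\<lambda>t. cnj (a (cis t)))" "H2_par (\<lambda>t. b (cis t))"
    using ab by (auto simp: Hbar_iff)
  then show "H2_par (\<lambda>t. s * (b (cis t) - y * cnj (a (cis t))))"
    by (intro H2_par_scale H2_par_diff)
  have i1: "integrable T_meas (\<lambda>t. b (cis t))"
    by (intro L2_par_integrable H2_parD(1) H2(2))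
  have i2: "integrable T_meas (\<lambda>t. y * cnj (a (cis t)))"
    by (intro L2_par_integrable L2_par_scale H2_parD(1) H2(1))
  show "fcoeff (\<lambda>t. s * (b (cis t) - y * cnj (a (cis t)))) 0 = 0"
    by (simp only: fcoeff_scale fcoeff_diff[OF i1 i2] fcoeff0_cnj_eq_at_inf[OF ab] b0) simp
qed

lemma step_exists:
  assumes ab: "(a, b) \<in> Hbar"
  shows "\<exists>c d. (c, d) \<in> Hbar \<and> step_rel a b (layer_coeff a b) c d"
proof -
  define y where "y = layer_coeff a b"
  define s where "s = complex_of_real (1 / sqrt (1 + (cmod y)\<^sup>2))"
  define c where "c z = s * (a z + y * star_fun b z)" for z
  define d where "d z = s * (b z - y * star_fun a z) / z" for z
  have H2: "H2_par (\<lambda>t. cnj (a (cis t)))" "H2_par (\<lambda>t. b (cis t))"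
    and unit: "AE t in T_meas. a (cis t) * cnj (a (cis t)) + b (cis t) * cnj (b (cis t)) = 1"
    using ab by (auto simp: Hbar_iff)
  note [measurable] = Hbar_measurable[OF ab]
  have b0: "fcoeff (\<lambda>t. b (cis t)) 0 = y * complex_of_real (Re (at_inf a))"
    unfolding y_def by (rule fcoeff0_snd_eq_layer_coeff[OF ab])
  have c_cis: "c (cis t) = s * (a (cis t) + y * cnj (b (cis t)))" for t
    by (simp add: c_def)
  have d_cis: "d (cis t) = s * (b (cis t) - y * cnj (a (cis t))) * cis (- t)" for t
    by (simp add: d_def divide_inverse)
  have step: "step_rel a b y c d"
    unfolding step_rel_iff s_def[symmetric]
    by (intro AE_I2) (simp add: c_cis d_cis mult.assoc cis_mult)
  have meas: "meas_T c" "meas_T d"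
    unfolding meas_T_def c_cis d_cis by measurable
  have "AE t in T_meas. c (cis t) * cnj (c (cis t)) + d (cis t) * cnj (d (cis t)) = 1"
    using unit unfolding c_cis d_cis s_def
    by eventually_elim (rule step_preserves_unit, simp_all add: cis_cnj cis_mult)
  moreover have "H2_par (\<lambda>t. cnj (c (cis t)))"
  proof -
    have "(\<lambda>t. cnj (c (cis t))) = (\<lambda>t. cnj s * cnj (a (cis t)) + (cnj s * cnj y) * b (cis t))"
      by (rule ext) (simp add: c_cis algebra_simps)
    then show ?thesis
      using H2 by (simp add: H2_par_add H2_par_scale)
  qed
  moreover have "H2_par (\<lambda>t. d (cis t))"
    unfolding d_cis by (rule H2_par_step_snd[OF ab b0])
  moreover have "at_inf c = complex_of_real (Re (at_inf a) * sqrt (1 + (cmod y)\<^sup>2))"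
    using ab meas(1) b0 by (intro at_inf_step_fst) (auto simp: c_cis s_def)
  moreover have "sqrt (1 + (cmod y)\<^sup>2) > 0"
    by (simp add: add_pos_nonneg)
  ultimately have "(c, d) \<in> Hbar"
    using meas ab by (auto simp: Hbar_iff complex_is_Real_iff)
  then show ?thesis
    using step unfolding y_def by blast
qed

section \<open>The product bound\<close>

lemma prodinf_ge_if_partial_prods_ge:
  fixes f :: "nat \<Rightarrow> real"
  assumes "\<And>n. 0 < f n" "\<And>n. f n \<le> 1" "\<And>N. c \<le> (\<Prod>n<N. f n)" "c > 0"
  shows "c \<le> (\<Prod>n. f n)"
proof -
  define P where "P N = (\<Prod>n<N. f n)" for N
  have dec: "decseq P"
    unfolding P_def using assms(1,2)
    by (intro decseq_SucI) (simp add: mult_left_le prod_nonneg less_imp_le)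
  obtain L where L: "P \<longlonglongrightarrow> L"
    using decseq_convergent[OF dec, of c] assms(3) unfolding P_def by blast
  have "c \<le> L"
    using L assms(3) by (intro LIMSEQ_le_const) (auto simp: P_def)
  have "f has_prod L"
    unfolding has_prod_def raw_has_prod_def
  proof (intro disjI1 conjI)
    have "(\<lambda>n. \<Prod>i\<le>n. f (i + 0)) = (\<lambda>n. P (Suc n))"
      by (simp add: P_def lessThan_Suc_atMost)
    then show "(\<lambda>n. \<Prod>i\<le>n. f (i + 0)) \<longlonglongrightarrow> L"
      using L by (simp add: LIMSEQ_Suc)
    show "L \<noteq> 0"
      using \<open>c \<le> L\<close> assms(4) by simp
  qed
  then have "(\<Prod>n. f n) = L"
    by (simp add: has_prod_unique[symmetric])
  then show ?thesis
    using \<open>c \<le> L\<close> by simp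
qed

lemma summable_if_prod_bounded:
  fixes x :: "nat \<Rightarrow> real"
  assumes "\<And>n. x n \<ge> 0" "\<And>N. (\<Prod>n<N. 1 + x n) \<le> B"
  shows "summable x"
proof (rule summableI_nonneg_bounded[OF assms(1)])
  fix N
  have "1 + (\<Sum>n<N. x n) \<le> (\<Prod>n<N. 1 + x n)"
  proof (induction N)
    case (Suc N)
    have "(\<Prod>n<N. 1 + x n) \<ge> 1"
      using assms(1) by (intro prod_ge_1) auto
    then have "x N \<le> (\<Prod>n<N. 1 + x n) * x N"
      using assms(1)[of N] by (simp add: mult_le_cancel_right1)
    then show ?case
      using Suc by (simp add: algebra_simps)
  qed simp
  then show "(\<Sum>n<N. x n) \<le> B"
    using assms(2)[of N] by simp
qed

text \<open>Here al n stands for the amplitude \<open>a\<^sub>n(\<infinity>)\<close>, which grows by the factor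
  \<open>(1 + |F\<^sub>n|\<^sup>2)\<^sup>1\<^sup>/\<^sup>2\<close> at each step, and x n for \<open>|F\<^sub>n|\<^sup>2\<close>.\<close>

lemma layer_amplitude_bounds:
  fixes al x :: "nat \<Rightarrow> real"
  assumes al_pos: "\<And>n. al n > 0" and al_le: "\<And>n. al n \<le> g" and "g \<le> 1" and x: "\<And>n. x n \<ge> 0"
    and al_Suc: "\<And>n. al (Suc n) = al n * sqrt (1 + x n)"
  shows "summable x" "al 0 \<le> g * (\<Prod>n. 1 / sqrt (1 + x n))"
proof -
  define P where "P N = (\<Prod>n<N. 1 / sqrt (1 + x n))" for N
  have P_pos: "P N > 0" for N
    unfolding P_def using x by (simp add: prod_pos add_pos_nonneg)
  have al_0: "al 0 = al N * P N" for N
  proof (induction N)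
    case (Suc N)
    have "sqrt (1 + x N) > 0"
      using x[of N] by (simp add: add_pos_nonneg)
    then show ?case
      using Suc by (simp add: P_def al_Suc field_simps)
  qed (simp add: P_def)
  have P_ge: "al 0 / g \<le> P N" for N
    using al_0[of N] al_le[of N] al_pos[of 0] al_pos[of N] P_pos[of N]
    by (simp add: divide_le_eq mult_right_mono)
  have "0 < g"
    using al_pos[of 0] al_le[of 0] by simp
  have "al 0 / g \<le> (\<Prod>n. 1 / sqrt (1 + x n))"
  proof (rule prodinf_ge_if_partial_prods_ge)
    show "0 < 1 / sqrt (1 + x n)" "1 / sqrt (1 + x n) \<le> 1" for n
      using x[of n] by (simp_all add: add_pos_nonneg)
    show "al 0 / g \<le> (\<Prod>n<N. 1 / sqrt (1 + x n))" for N
      using P_ge unfolding P_def .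
    show "0 < al 0 / g"
      using al_pos[of 0] \<open>0 < g\<close> by simp
  qed
  then show "al 0 \<le> g * (\<Prod>n. 1 / sqrt (1 + x n))"
    using \<open>0 < g\<close> by (simp add: divide_le_eq mult.commute)
  show "summable x"
  proof (rule summable_if_prod_bounded[OF x])
    fix N
    have "(\<Prod>n<N. 1 + x n) = (\<Prod>n<N. (sqrt (1 + x n))\<^sup>2)"
      using x by (intro prod.cong) (auto simp: add_nonneg_nonneg)
    also have "\<dots> = (1 / P N)\<^sup>2"
      unfolding P_def by (simp add: prod_power_distrib prod_dividef)
    also have "\<dots> \<le> (1 / al 0)\<^sup>2"
      using al_0[of N] al_le[of N] \<open>g \<le> 1\<close> P_pos[of N] al_pos
      by (intro power_mono) (auto simp: field_simps mult_le_cancel_right1)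
    finally show "(\<Prod>n<N. 1 + x n) \<le> (1 / al 0)\<^sup>2" .
  qed
qed

section \<open>Strictness outside H\<close>

definition common_inner_factor ::
    "(real \<Rightarrow> complex) \<Rightarrow> (complex \<Rightarrow> complex) \<Rightarrow> (complex \<Rightarrow> complex) \<Rightarrow> bool" where
  "common_inner_factor G a b \<longleftrightarrow> H2_par (\<lambda>t. cnj (a (cis t)) / G t) \<and> H2_par (\<lambda>t. b (cis t) / G t)"

lemma at_inf_le_if_common_inner_factor:
  assumes G: "H2_par G" "AE t in T_meas. cmod (G t) = 1"
    and ab: "(a, b) \<in> Hbar" and "common_inner_factor G a b"
  shows "Re (at_inf a) \<le> cmod (fcoeff G 0)"
proof -
  define u where "u t = cnj (a (cis t)) / G t" for t
  note [measurable] = Hbar_measurable[OF ab]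
  have [measurable]: "G \<in> borel_measurable T_meas"
    using G by (simp add: H2_par_def L2_par_def)
  have "H2_par u"
    using assms(4) unfolding common_inner_factor_def u_def by simp
  have "complex_of_real (Re (at_inf a)) = fcoeff (\<lambda>t. G t * u t) 0"
    unfolding fcoeff0_cnj_eq_at_inf[OF ab, symmetric] u_def using G(2)
    by (intro fcoeff_cong) (measurable, auto elim: eventually_mono)
  also have "\<dots> = fcoeff G 0 * fcoeff u 0"
    using G \<open>H2_par u\<close> by (intro fcoeff0_mult_H2) (auto elim: eventually_mono)
  finally have "Re (at_inf a) \<le> cmod (fcoeff G 0) * cmod (fcoeff u 0)"
    by (metis Re_complex_of_real complex_Re_le_cmod norm_mult)
  moreover have "cmod (fcoeff u 0) \<le> 1"
  proof (rule norm_fcoeff_le)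
    show "u \<in> borel_measurable T_meas"
      unfolding u_def by measurable
    show "AE t in T_meas. cmod (u t) \<le> 1"
      using ab G(2) unfolding Hbar_iff
      by (auto simp: u_def norm_divide norm_le_1_if_unit elim!: eventually_mono[OF eventually_conj])
  qed
  ultimately show ?thesis
    by (meson mult_left_le norm_ge_zero order_trans)
qed

lemma H2_par_div_inner:
  assumes G: "H2_par G" "AE t in T_meas. cmod (G t) = 1" "fcoeff G 0 \<noteq> 0"
    and "H2_par f" "H2_par w" and fw: "AE t in T_meas. f t * cis t = G t * w t"
  shows "H2_par (\<lambda>t. f t / G t)"
proof -
  have [measurable]: "G \<in> borel_measurable T_meas" "f \<in> borel_measurable T_meas" "w \<in> borel_measurable T_meas"
    using assms by (simp_all add: H2_par_def L2_par_def)
  have "fcoeff G 0 * fcoeff w 0 = fcoeff (\<lambda>t. G t * w t) 0"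
    using G \<open>H2_par w\<close> by (intro fcoeff0_mult_H2[symmetric]) (auto elim: eventually_mono)
  also have "\<dots> = fcoeff (\<lambda>t. f t * cis t) 0"
    by (rule fcoeff_cong) (measurable, use fw in \<open>auto elim: eventually_mono\<close>)
  also have "\<dots> = 0"
    using \<open>H2_par f\<close> unfolding fcoeff_mult_cis by (simp add: H2_par_def)
  finally have "fcoeff w 0 = 0"
    using G(3) by simp
  with \<open>H2_par w\<close> have shifted: "H2_par (\<lambda>t. w t * cis (- t))"
    by (rule H2_par_mult_cis_uminus)
  have ae: "AE t in T_meas. w t * cis (- t) = f t / G t"
    using fw G(2)
  proof eventually_elim
    case (elim t)
    have "f t / G t = (f t * cis t) * cis (- t) / G t"
      by (simp add: mult.assoc cis_mult)
    then show ?case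
      using elim by auto
  qed
  show ?thesis
    by (rule H2_par_cong[OF shifted _ ae]) measurable
qed

text \<open>Dividing the step relation by G carries a common inner factor of \<open>a\<^sup>*, b\<close> over to
  \<open>c\<^sup>*\<close> and to \<open>z d\<close>.\<close>

lemma common_inner_factor_step:
  assumes G: "H2_par G" "AE t in T_meas. cmod (G t) = 1" "fcoeff G 0 \<noteq> 0"
    and ab: "(a, b) \<in> Hbar" and cd: "(c, d) \<in> Hbar" and st: "step_rel a b y c d"
    and factor: "common_inner_factor G a b"
  shows "common_inner_factor G c d"
proof -
  define s where "s = complex_of_real (1 / sqrt (1 + (cmod y)\<^sup>2))"
  define u where "u t = cnj (a (cis t)) / G t" for t
  define v where "v t = b (cis t) / G t" for t
  note [measurable] = Hbar_measurable[OF ab] Hbar_measurable[OF cd]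
  have [measurable]: "G \<in> borel_measurable T_meas"
    using G by (simp add: H2_par_def L2_par_def)
  have uv: "H2_par u" "H2_par v"
    using factor unfolding common_inner_factor_def u_def v_def by simp_all
  have AE_step: "AE t in T_meas. G t \<noteq> 0 \<and>
      c (cis t) = s * (a (cis t) + y * cnj (b (cis t))) \<and>
      d (cis t) * cis t = s * (b (cis t) - y * cnj (a (cis t)))"
    using st G(2) unfolding step_rel_iff s_def by (auto elim: eventually_mono[OF eventually_conj])
  have "H2_par (\<lambda>t. cnj (c (cis t)) / G t)"
  proof (rule H2_par_cong)
    show "H2_par (\<lambda>t. cnj s * u t + (cnj s * cnj y) * v t)"
      using uv by (intro H2_par_add H2_par_scale)
    show "AE t in T_meas. cnj s * u t + (cnj s * cnj y) * v t = cnj (c (cis t)) / G t"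
      using AE_step by eventually_elim (simp add: u_def v_def field_simps s_def, simp add: add_divide_distrib)
  qed measurable
  moreover have "H2_par (\<lambda>t. d (cis t) / G t)"
  proof (rule H2_par_div_inner[OF G])
    show "H2_par (\<lambda>t. d (cis t))"
      using cd by (simp add: Hbar_iff)
    show "H2_par (\<lambda>t. s * (v t - y * u t))"
      using uv by (intro H2_par_scale H2_par_diff)
    show "AE t in T_meas. d (cis t) * cis t = G t * (s * (v t - y * u t))"
      using AE_step
    proof eventually_elim
      case (elim t)
      then have "G t * (v t - y * u t) = b (cis t) - y * cnj (a (cis t))"
        by (simp add: u_def v_def field_simps)
      then show ?case
        using elim by (simp add: mult.left_commute)
    qed
  qed
  ultimately show ?thesis
    unfolding common_inner_factor_def by simp
qed

lemma layer_amplitudes_bounded_if_not_Hset: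
  assumes ab: "(a, b) \<in> Hbar" "(a, b) \<notin> Hset" and A0: "A 0 = a" "B 0 = b"
    and layers: "\<And>n. (A (Suc n), B (Suc n)) \<in> Hbar \<and> step_rel (A n) (B n) (F n) (A (Suc n)) (B (Suc n))"
  obtains g where "g < 1" "\<And>n. Re (at_inf (A n)) \<le> g"
proof -
  obtain g where "inner_fun g" "H2_D (\<lambda>z. star_fun a z / g z)" "H2_D (\<lambda>z. b z / g z)"
    and nonconst: "\<not> (\<exists>c. ae_T (\<lambda>z. g z = c))"
    using ab unfolding Hset_def by auto
  define G where "G t = g (cis t)" for t
  have G: "H2_par G" "AE t in T_meas. cmod (G t) = 1"
    using \<open>inner_fun g\<close> unfolding inner_fun_def G_def ae_T_def H2_D_iff by auto
  have [measurable]: "G \<in> borel_measurable T_meas"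
    using G by (simp add: H2_par_def L2_par_def)
  have Hbar_n: "(A n, B n) \<in> Hbar" for n
    using layers ab A0 by (cases n) auto
  have factor0: "common_inner_factor G a b"
    using \<open>H2_D (\<lambda>z. star_fun a z / g z)\<close> \<open>H2_D (\<lambda>z. b z / g z)\<close>
    unfolding common_inner_factor_def H2_D_iff G_def by simp
  have "0 < Re (at_inf a)"
    using ab by (simp add: Hbar_iff)
  then have "fcoeff G 0 \<noteq> 0"
    using at_inf_le_if_common_inner_factor[OF G ab(1) factor0] by auto
  have factor: "common_inner_factor G (A n) (B n)" for n
  proof (induction n)
    case 0
    then show ?case
      using factor0 A0 by simp
  next
    case (Suc n)
    then show ?case
      using common_inner_factor_step[OF G \<open>fcoeff G 0 \<noteq> 0\<close> Hbar_n[of n] Hbar_n[of "Suc n"]] layers[of n]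
      by blast
  qed
  have "\<nexists>c. AE t in T_meas. G t = c"
    using nonconst unfolding ae_T_def G_def by blast
  then have "cmod (fcoeff G 0) < 1"
    using G(2) by (intro norm_fcoeff0_less_1) auto
  then show ?thesis
    using at_inf_le_if_common_inner_factor[OF G Hbar_n factor] by (rule that)
qed

section \<open>The layer-stripping sequence\<close>

lemma layer_coeff_unique:
  assumes "(a, b) \<in> Hbar"
  shows "\<exists>!y. \<exists>c d. (c, d) \<in> Hbar \<and> step_rel a b y c d"
proof (rule ex1I)
  show "\<exists>c d. (c, d) \<in> Hbar \<and> step_rel a b (layer_coeff a b) c d"
    by (rule step_exists[OF assms])
  fix y
  assume "\<exists>c d. (c, d) \<in> Hbar \<and> step_rel a b y c d"
  then obtain c d where "(c, d) \<in> Hbar" "step_rel a b y c d"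
    by blast
  then show "y = layer_coeff a b"
    by (rule step_unique(1)[OF assms])
qed

lemma layer_sequence_exists:
  assumes "(a, b) \<in> Hbar"
  shows "\<exists>A B F. A 0 = a \<and> B 0 = b \<and>
    (\<forall>n. (A (Suc n), B (Suc n)) \<in> Hbar \<and> step_rel (A n) (B n) (F n) (A (Suc n)) (B (Suc n)))"
proof -
  define next_layer where "next_layer p =
      (SOME q. q \<in> Hbar \<and> step_rel (fst p) (snd p) (layer_coeff (fst p) (snd p)) (fst q) (snd q))" for p
  have next_layer: "next_layer p \<in> Hbar \<and>
      step_rel (fst p) (snd p) (layer_coeff (fst p) (snd p)) (fst (next_layer p)) (snd (next_layer p))"
    if p: "p \<in> Hbar" for p
  proof -
    obtain c d where "(c, d) \<in> Hbar" "step_rel (fst p) (snd p) (layer_coeff (fst p) (snd p)) c d"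
      using step_exists[of "fst p" "snd p"] p by (metis prod.collapse)
    then have "\<exists>q. q \<in> Hbar \<and> step_rel (fst p) (snd p) (layer_coeff (fst p) (snd p)) (fst q) (snd q)"
      by (intro exI[of _ "(c, d)"]) auto
    then show ?thesis
      unfolding next_layer_def by (rule someI_ex)
  qed
  define AB where "AB n = (next_layer ^^ n) (a, b)" for n
  have AB: "AB n \<in> Hbar" for n
    by (induction n) (auto simp: AB_def assms next_layer)
  show ?thesis
  proof (intro exI conjI allI)
    fix n
    show "(fst (AB (Suc n)), snd (AB (Suc n))) \<in> Hbar"
      using AB[of "Suc n"] by simp
    show "step_rel (fst (AB n)) (snd (AB n)) (layer_coeff (fst (AB n)) (snd (AB n)))
        (fst (AB (Suc n))) (snd (AB (Suc n)))"
      using next_layer[OF AB[of n]] by (simp add: AB_def)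
  qed (simp_all add: AB_def)
qed

lemma layer_sequence_bounds:
  assumes ab: "(a, b) \<in> Hbar" and A0: "A 0 = a" "B 0 = b"
    and layers: "\<And>n. (A (Suc n), B (Suc n)) \<in> Hbar \<and> step_rel (A n) (B n) (F n) (A (Suc n)) (B (Suc n))"
  shows "summable (\<lambda>n. (cmod (F n))\<^sup>2)"
    and "Re (at_inf a) \<le> (\<Prod>n. 1 / sqrt (1 + (cmod (F n))\<^sup>2))"
    and "(a, b) \<notin> Hset \<Longrightarrow> Re (at_inf a) < (\<Prod>n. 1 / sqrt (1 + (cmod (F n))\<^sup>2))"
proof -
  have Hbar_n: "(A n, B n) \<in> Hbar" for n
    using layers ab A0 by (cases n) auto
  define al where "al n = Re (at_inf (A n))" for n
  have al: "al n > 0" "al n \<le> 1" "al (Suc n) = al n * sqrt (1 + (cmod (F n))\<^sup>2)" for n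
    using Hbar_n[of n] Re_at_inf_le_1[OF Hbar_n[of n]] step_unique(2)[OF Hbar_n[of n] Hbar_n[of "Suc n"]] layers[of n]
    by (auto simp: al_def Hbar_iff)
  let ?P = "\<Prod>n. 1 / sqrt (1 + (cmod (F n))\<^sup>2)"
  note bounds = layer_amplitude_bounds[of al _ "\<lambda>n. (cmod (F n))\<^sup>2", OF al(1) _ _ _ al(3)]
  have "al 0 \<le> ?P"
    using bounds(2)[of 1] al(2) by simp
  then show "Re (at_inf a) \<le> ?P"
    using A0 by (simp add: al_def)
  show "summable (\<lambda>n. (cmod (F n))\<^sup>2)"
    using bounds(1)[of 1] al(2) by simp
  assume "(a, b) \<notin> Hset"
  then obtain g where g: "g < 1" "\<And>n. al n \<le> g"
    using layer_amplitudes_bounded_if_not_Hset[OF ab _ A0 layers] unfolding al_def by blast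
  have "0 < ?P"
    using \<open>al 0 \<le> ?P\<close> al(1)[of 0] by linarith
  then have "g * ?P < ?P"
    using g(1) by simp
  moreover have "al 0 \<le> g * ?P"
    using bounds(2)[of g] g by simp
  ultimately show "Re (at_inf a) < ?P"
    using A0 by (simp add: al_def)
qed

theorem theorem6p3:
  fixes a b :: "complex \<Rightarrow> complex"
  assumes ab: "(a, b) \<in> Hbar"
  shows "(\<exists>!y. \<exists>c d. (c, d) \<in> Hbar \<and> step_rel a b y c d)
    \<and> (\<exists>A B F. A 0 = a \<and> B 0 = b \<and>
         (\<forall>n. (A (Suc n), B (Suc n)) \<in> Hbar \<and> step_rel (A n) (B n) (F n) (A (Suc n)) (B (Suc n))))
    \<and> (\<forall>A B F. A 0 = a \<and> B 0 = b \<and>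
         (\<forall>n. (A (Suc n), B (Suc n)) \<in> Hbar \<and> step_rel (A n) (B n) (F n) (A (Suc n)) (B (Suc n)))
       \<longrightarrow> summable (\<lambda>n. (cmod (F n))\<^sup>2)
         \<and> Re (at_inf a) \<le> (\<Prod>n. 1 / sqrt (1 + (cmod (F n))\<^sup>2))
         \<and> ((a, b) \<notin> Hset \<longrightarrow> Re (at_inf a) < (\<Prod>n. 1 / sqrt (1 + (cmod (F n))\<^sup>2))))"
  using layer_coeff_unique[OF ab] layer_sequence_exists[OF ab] layer_sequence_bounds[OF ab] by blast

end
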